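(* Let $A=(a_0;a_1,\dots,a_n;a_{n+1})$ be a generator of $\mathcal C_S$, and let $\mathcal C_A$ be the sub-DGA of $\mathcal C_S$ generated by all pieces $A_i$ of all cuts $(A_1,\dots,A_k)$ of $A$. Then $H^0B(\mathcal C_A)$ is generated, as a $\mathbb Q$-algebra (under the shuffle product), by the elements $T(B)$ where $B$ ranges over the pieces of cuts of $A$.
   Context: $\mathcal C_S$ ($S$ a set) is the graded-commutative unital $\mathbb Q$-algebra freely generated by symbols $(a_0;a_1,\dots,a_n;a_{n+1})$, $n\ge1$, $a_i\in S$, of degree 1 and Adams degree $n$, with differential the derivation $dA=-\sum_{\text{2-cuts}}A'A''$. A 2-cut of $A$ is, for $0\le i<j\le n$, $(i,j)\ne(0,n)$, the pair $A'=(a_0;a_1,\dots,a_i,a_{j+1},\dots,a_n;a_{n+1})$, $A''=(a_i;a_{i+1},\dots,a_j;a_{j+1})$; $k$-cuts are ordered $k$-tuples obtained iteratively from the 1-cut $(A)$ by replacing an entry by the two consecutive entries of one of its 2-cuts (recorded by index positions). For a generator $B$, $T(B)=\sum_{\text{cuts }(B_1,\dots,B_k)\text{ of }B}[B_1|\cdots|B_k]$ in the bar construction $B(\mathcal C_A)$ (standard bar construction of an augmented commutative DGA, with shuffle product and deconcatenation coproduct); $T(B)$ is a cocycle. *)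

theory Defs
  imports Complex_Main
begin

(* A generator (a_0; a_1,...,a_n; a_{n+1}) of C_S (n >= 1, a_i in S) is encoded as the
   list [a_0, a_1, ..., a_{n+1}] :: 'a list of length n+2 >= 3; the set S is the type 'a. *)

definition is_generator :: "'a list \<Rightarrow> bool" where
  "is_generator A \<longleftrightarrow> length A \<ge> 3"

(* Pieces of cuts are recorded by index positions: a piece is an increasing list of
   positions into the original generator. 2-cuts of an index list p = [p_0,...,p_{m+1}]:
   for 0 <= i < j <= m, (i,j) ~= (0,m):
     A'  = (p_0; p_1..p_i, p_{j+1}..p_m; p_{m+1}),   A'' = (p_i; p_{i+1}..p_j; p_{j+1}). *)
definition twocuts_idx :: "nat list \<Rightarrow> (nat list \<times> nat list) set" where
  "twocuts_idx p =
     {(take (i+1) p @ drop (j+1) p, take (j - i + 2) (drop i p)) | i j.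
        i < j \<and> j \<le> length p - 2 \<and> (i, j) \<noteq> (0, length p - 2)}"

inductive_set cuts_idx :: "nat \<Rightarrow> nat list list set" for L :: nat where
  base: "[[0..<L]] \<in> cuts_idx L"
| step: "c \<in> cuts_idx L \<Longrightarrow> k < length c \<Longrightarrow> (p, q) \<in> twocuts_idx (c ! k) \<Longrightarrow>
         take k c @ [p, q] @ drop (Suc k) c \<in> cuts_idx L"

definition sym_of :: "'a list \<Rightarrow> nat list \<Rightarrow> 'a list" where
  "sym_of b q = map (\<lambda>i. b ! i) q"

definition pieces :: "'a list \<Rightarrow> 'a list set" where
  "pieces A = {sym_of A q | c q. c \<in> cuts_idx (length A) \<and> q \<in> set c}"

(* Elements of the bar construction in bar degree 0: finitely supported Q-linear
   combinations of words [B_1|...|B_k] (k >= 0) of degree-1 elements; we use the basis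
   of words in generators. *)
type_synonym 'a bar0 = "'a list list \<Rightarrow> rat"

(* T(B) = sum over cuts (B_1,...,B_k) of B of [B_1|...|B_k] *)
definition T :: "'a list \<Rightarrow> 'a bar0" where
  "T b w = of_nat (card {c \<in> cuts_idx (length b). map (sym_of b) c = w})"

(* number of 2-cuts (c',c'') of the generator c with c' = a and c'' = b,
   so that d c = - sum_{a,b} ncut c a b * a b *)
definition ncut :: "'a list \<Rightarrow> 'a list \<Rightarrow> 'a list \<Rightarrow> nat" where
  "ncut c a b = card {(p, q) \<in> twocuts_idx [0..<length c]. sym_of c p = a \<and> sym_of c q = b}"

(* degree-0 part of B(C_A): words in the generators of C_A, i.e. in the pieces of A *)
definition bar0_space :: "'a list \<Rightarrow> 'a bar0 set" where
  "bar0_space A = {x. finite {w. x w \<noteq> 0} \<and> (\<forall>w. x w \<noteq> 0 \<longrightarrow> set w \<subseteq> pieces A)}"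

(* Bar differential of a degree-0 element, landing in bar degree 1, i.e. in the span of
   [u | a*b | v] with a*b in (C_A)^2 = Lambda^2 (C_A)^1.  bar_d x u a b v is the coefficient
   of the tensor [u | a (x) b | v] before passing to a*b = -b*a; the differential is
     d[B_1|...|B_k] = sum_i [..|dB_i|..] + sum_i [..|B_i B_{i+1}|..]. *)
definition bar_d :: "'a bar0 \<Rightarrow> 'a list list \<Rightarrow> 'a list \<Rightarrow> 'a list \<Rightarrow> 'a list list \<Rightarrow> rat" where
  "bar_d x u a b v =
     x (u @ [a, b] @ v) - (\<Sum>c\<in>{c. x (u @ c # v) \<noteq> 0}. x (u @ c # v) * of_nat (ncut c a b))"

(* H^0 B(C_A) = kernel of d on bar degree 0 (bar degree -1 is zero).  An element of
   V (x) V maps to 0 in Lambda^2 V iff its coefficient function is symmetric. *)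
definition H0 :: "'a list \<Rightarrow> 'a bar0 set" where
  "H0 A = {x \<in> bar0_space A. \<forall>u a b v. bar_d x u a b v = bar_d x u b a v}"

(* shuffle product (no signs in bar degree 0) and unit *)
definition shuffle_prod :: "'a bar0 \<Rightarrow> 'a bar0 \<Rightarrow> 'a bar0" where
  "shuffle_prod x y w = (\<Sum>I\<in>Pow {..<length w}. x (nths w I) * y (nths w ({..<length w} - I)))"

definition bar_one :: "'a bar0" where
  "bar_one w = (if w = [] then 1 else 0)"

inductive_set subalg_gen :: "'a bar0 set \<Rightarrow> 'a bar0 set" for G :: "'a bar0 set" where
  gen: "x \<in> G \<Longrightarrow> x \<in> subalg_gen G"
| one: "bar_one \<in> subalg_gen G"
| add: "x \<in> subalg_gen G \<Longrightarrow> y \<in> subalg_gen G \<Longrightarrow> (\<lambda>w. x w + y w) \<in> subalg_gen G"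
| smult: "x \<in> subalg_gen G \<Longrightarrow> (\<lambda>w. r * x w) \<in> subalg_gen G"
| mult: "x \<in> subalg_gen G \<Longrightarrow> y \<in> subalg_gen G \<Longrightarrow> shuffle_prod x y \<in> subalg_gen G"

end

theory Submission
  imports Defs
begin

(* 1. Shuffle algebra: the shuffle product satisfies a Leibniz rule with respect to left
      quotients by a letter, and the differential satisfies a Leibniz rule with respect to
      the shuffle product; hence shuffle products of cocycles are cocycles.
   2. Cuts: for a strictly increasing index list a 2-cut is determined by the two values at
      which it is made; every cut arises from a smaller one by cutting off an inner piece last.
   3. T(B) is a cocycle: at the end of a word the differential pairs up successive 2-cuts;
      nested pairs cancel against contraction terms, separated pairs are symmetric.
   4. Generation: with z = sum over pieces B of T(B) shuffled with the left quotient of x by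
      B, an element x of H0 vanishing below length m >= 1 agrees with z/m in length m.  By
      induction on the Adams weight (left quotients have smaller weight) and descending
      induction on m, every element of H0 lies in the subalgebra generated by the T(B). *)

definition lquot :: "'a list \<Rightarrow> 'a bar0 \<Rightarrow> 'a bar0" where
  "lquot a x = (\<lambda>w. x (a # w))"

lemma shuffle_Nil: "shuffle_prod x y [] = x [] * y []"
  by (simp add: shuffle_prod_def)

lemma nths_Cons_Suc_image: "nths (a # w) (Suc ` J) = nths w J"
  by (simp add: nths_Cons image_iff)

lemma nths_Cons_insert_0: "nths (a # w) (insert 0 (Suc ` J)) = a # nths w J"
  by (simp add: nths_Cons image_iff)

text \<open>The recursive description of the shuffle product: the first letter of a word comes
  either from the left or from the right factor.\<close>

lemma shuffle_Cons:
  "shuffle_prod x y (a # w) = shuffle_prod (lquot a x) y w + shuffle_prod x (lquot a y) w"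
proof -
  define n where "n = length w"
  define S where "S = Suc ` {..<n}"
  define F where "F I = x (nths (a # w) I) * y (nths (a # w) (insert 0 S - I))" for I
  have U: "{..<length (a # w)} = insert 0 S"
    by (simp add: S_def n_def lessThan_Suc_eq_insert_0)
  have PS: "Pow S = image Suc ` Pow {..<n}"
    unfolding S_def by (rule image_Pow_surj[symmetric]) simp
  have "0 \<notin> S" by (simp add: S_def)
  then have inj: "inj_on (insert 0) (Pow S)"
    by (intro inj_onI) (metis PowD insert_ident subset_eq)
  have "shuffle_prod x y (a # w) = (\<Sum>I\<in>Pow (insert 0 S). F I)"
    unfolding shuffle_prod_def U F_def by simp
  also have "\<dots> = (\<Sum>I\<in>Pow S. F I) + (\<Sum>I\<in>Pow S. F (insert 0 I))"
    unfolding Pow_insert using \<open>0 \<notin> S\<close> inj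
    by (subst sum.union_disjoint) (auto simp: S_def sum.reindex)
  also have "(\<Sum>I\<in>Pow S. F I) = (\<Sum>J\<in>Pow {..<n}. F (Suc ` J))"
    unfolding PS by (subst sum.reindex) (simp_all add: inj_on_image_Pow o_def)
  also have "\<dots> = shuffle_prod x (lquot a y) w"
    unfolding shuffle_prod_def n_def[symmetric]
  proof (rule sum.cong[OF refl])
    fix J assume "J \<in> Pow {..<n}"
    then have "insert 0 S - Suc ` J = insert 0 (Suc ` ({..<n} - J))" by (auto simp: S_def)
    then show "F (Suc ` J) = x (nths w J) * lquot a y (nths w ({..<n} - J))"
      unfolding F_def lquot_def by (simp add: nths_Cons_Suc_image nths_Cons_insert_0)
  qed
  also have "(\<Sum>I\<in>Pow S. F (insert 0 I)) = (\<Sum>J\<in>Pow {..<n}. F (insert 0 (Suc ` J)))"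
    unfolding PS by (subst sum.reindex) (simp_all add: inj_on_image_Pow o_def)
  also have "\<dots> = shuffle_prod (lquot a x) y w"
    unfolding shuffle_prod_def n_def[symmetric]
  proof (rule sum.cong[OF refl])
    fix J assume "J \<in> Pow {..<n}"
    then have "insert 0 S - insert 0 (Suc ` J) = Suc ` ({..<n} - J)" by (auto simp: S_def)
    then show "F (insert 0 (Suc ` J)) = lquot a x (nths w J) * y (nths w ({..<n} - J))"
      unfolding F_def lquot_def by (simp add: nths_Cons_Suc_image nths_Cons_insert_0)
  qed
  finally show ?thesis by simp
qed

lemma shuffle_zero_left: "shuffle_prod (\<lambda>_. 0) y = (\<lambda>_. 0)"
  by (simp add: shuffle_prod_def fun_eq_iff)

lemma shuffle_zero_right: "shuffle_prod x (\<lambda>_. 0) = (\<lambda>_. 0)"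
  by (simp add: shuffle_prod_def fun_eq_iff)

lemma shuffle_sum_left:
  "finite I \<Longrightarrow> shuffle_prod (\<lambda>w. \<Sum>i\<in>I. f i w) y w = (\<Sum>i\<in>I. shuffle_prod (f i) y w)"
  unfolding shuffle_prod_def by (simp add: sum_distrib_right sum.swap[of _ I])

lemma shuffle_sum_right:
  "finite I \<Longrightarrow> shuffle_prod x (\<lambda>w. \<Sum>i\<in>I. f i w) w = (\<Sum>i\<in>I. shuffle_prod x (f i) w)"
  unfolding shuffle_prod_def by (simp add: sum_distrib_left sum.swap[of _ I])

lemma shuffle_diff_left:
  "shuffle_prod (\<lambda>w. f w - g w) y w = shuffle_prod f y w - shuffle_prod g y w"
  unfolding shuffle_prod_def by (simp add: left_diff_distrib sum_subtractf)

lemma shuffle_diff_right: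
  "shuffle_prod x (\<lambda>w. f w - g w) w = shuffle_prod x f w - shuffle_prod x g w"
  unfolding shuffle_prod_def by (simp add: right_diff_distrib sum_subtractf)

lemma shuffle_scale_left:
  "shuffle_prod (\<lambda>w. f w * r) y w = shuffle_prod f y w * r"
  unfolding shuffle_prod_def sum_distrib_right by (rule sum.cong) (simp_all add: mult_ac)

lemma shuffle_scale_right:
  "shuffle_prod x (\<lambda>w. f w * r) w = shuffle_prod x f w * r"
  unfolding shuffle_prod_def sum_distrib_right by (rule sum.cong) (simp_all add: mult_ac)

lemma shuffle_Cons_nonzero:
  assumes "shuffle_prod x y (a # w) \<noteq> 0"
  obtains w' where "x (a # w') \<noteq> 0" | w' where "y (a # w') \<noteq> 0"
proof -
  have "lquot a x \<noteq> (\<lambda>_. 0) \<or> lquot a y \<noteq> (\<lambda>_. 0)"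
    using assms by (auto simp: shuffle_Cons shuffle_zero_left shuffle_zero_right)
  then show thesis using that by (auto simp: lquot_def fun_eq_iff)
qed

lemma shuffle_support_additive:
  fixes \<phi> :: "'a list \<Rightarrow> nat" and L :: "'a list set"
  assumes "\<And>w. x w \<noteq> 0 \<Longrightarrow> set w \<subseteq> L \<and> sum_list (map \<phi> w) \<le> n"
    and "\<And>w. y w \<noteq> 0 \<Longrightarrow> set w \<subseteq> L \<and> sum_list (map \<phi> w) \<le> m"
    and "shuffle_prod x y w \<noteq> 0"
  shows "set w \<subseteq> L \<and> sum_list (map \<phi> w) \<le> n + m"
  using assms
proof (induction w arbitrary: x y n m)
  case Nil then show ?case by simp
next
  case (Cons a w)
  from Cons.prems(3) have "shuffle_prod (lquot a x) y w \<noteq> 0 \<or> shuffle_prod x (lquot a y) w \<noteq> 0"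
    by (auto simp: shuffle_Cons)
  then show ?case
  proof
    assume h: "shuffle_prod (lquot a x) y w \<noteq> 0"
    then have "lquot a x \<noteq> (\<lambda>_. 0)" using shuffle_zero_left by metis
    then obtain w' where "x (a # w') \<noteq> 0" by (auto simp: lquot_def fun_eq_iff)
    then have a: "a \<in> L" "\<phi> a \<le> n" using Cons.prems(1) by fastforce+
    have "set w' \<subseteq> L \<and> sum_list (map \<phi> w') \<le> n - \<phi> a" if "lquot a x w' \<noteq> 0" for w'
      using Cons.prems(1)[of "a # w'"] that by (auto simp: lquot_def)
    then have "set w \<subseteq> L \<and> sum_list (map \<phi> w) \<le> (n - \<phi> a) + m"
      using Cons.IH[OF _ Cons.prems(2) h] by blast
    then show ?thesis using a by auto
  next
    assume h: "shuffle_prod x (lquot a y) w \<noteq> 0"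
    then have "lquot a y \<noteq> (\<lambda>_. 0)" using shuffle_zero_right by metis
    then obtain w' where "y (a # w') \<noteq> 0" by (auto simp: lquot_def fun_eq_iff)
    then have a: "a \<in> L" "\<phi> a \<le> m" using Cons.prems(2) by fastforce+
    have "set w' \<subseteq> L \<and> sum_list (map \<phi> w') \<le> m - \<phi> a" if "lquot a y w' \<noteq> 0" for w'
      using Cons.prems(2)[of "a # w'"] that by (auto simp: lquot_def)
    then have "set w \<subseteq> L \<and> sum_list (map \<phi> w) \<le> n + (m - \<phi> a)"
      using Cons.IH[OF Cons.prems(1) _ h] by blast
    then show ?thesis using a by auto
  qed
qed

definition fin_supp :: "'a bar0 \<Rightarrow> bool" where
  "fin_supp x \<longleftrightarrow> finite {w. x w \<noteq> 0}"

lemma fin_supp_add: "fin_supp x \<Longrightarrow> fin_supp y \<Longrightarrow> fin_supp (\<lambda>w. x w + y w)"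
  unfolding fin_supp_def by (rule finite_subset[of _ "{w. x w \<noteq> 0} \<union> {w. y w \<noteq> 0}"]) auto

lemma fin_supp_scale: "fin_supp x \<Longrightarrow> fin_supp (\<lambda>w. r * x w)"
  unfolding fin_supp_def by (rule finite_subset[of _ "{w. x w \<noteq> 0}"]) auto

lemma fin_supp_sum:
  "finite I \<Longrightarrow> (\<And>i. i \<in> I \<Longrightarrow> fin_supp (f i)) \<Longrightarrow> fin_supp (\<lambda>w. \<Sum>i\<in>I. f i w)"
  unfolding fin_supp_def
  by (rule finite_subset[of _ "\<Union>i\<in>I. {w. f i w \<noteq> 0}"]) (use sum.neutral in force)+

lemma fin_supp_lquot: "fin_supp x \<Longrightarrow> fin_supp (lquot a x)"
  unfolding fin_supp_def lquot_def
  by (drule finite_vimageI[of _ "\<lambda>w. a # w"]) (simp_all add: inj_on_def vimage_def)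

lemma fin_supp_middle: "fin_supp x \<Longrightarrow> finite {c. x (u @ c # v) \<noteq> 0}"
  unfolding fin_supp_def
  by (drule finite_vimageI[of _ "\<lambda>c. u @ c # v"]) (simp_all add: inj_on_def vimage_def)

lemma fin_supp_first_letters: "fin_supp x \<Longrightarrow> finite {c. \<exists>w. x (c # w) \<noteq> 0}"
  unfolding fin_supp_def
  by (erule finite_surj[of _ _ hd]) (auto intro: rev_image_eqI)

lemma fin_supp_iff_bounded:
  "fin_supp x \<longleftrightarrow> (\<exists>L n. finite L \<and> (\<forall>w. x w \<noteq> 0 \<longrightarrow> set w \<subseteq> L \<and> length w \<le> n))"
proof
  assume "fin_supp x"
  then have W: "finite {w. x w \<noteq> 0}" by (simp add: fin_supp_def)
  show "\<exists>L n. finite L \<and> (\<forall>w. x w \<noteq> 0 \<longrightarrow> set w \<subseteq> L \<and> length w \<le> n)"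
    by (rule exI[of _ "\<Union>w\<in>{w. x w \<noteq> 0}. set w"], rule exI[of _ "Max (length ` {w. x w \<noteq> 0})"])
      (use W in auto)
next
  assume "\<exists>L n. finite L \<and> (\<forall>w. x w \<noteq> 0 \<longrightarrow> set w \<subseteq> L \<and> length w \<le> n)"
  then obtain L n where "finite L" "\<forall>w. x w \<noteq> 0 \<longrightarrow> set w \<subseteq> L \<and> length w \<le> n" by blast
  then show "fin_supp x"
    unfolding fin_supp_def by (intro finite_subset[OF _ finite_lists_length_le[of L n]]) auto
qed

lemma fin_supp_shuffle:
  assumes "fin_supp x" "fin_supp y"
  shows "fin_supp (shuffle_prod x y)"
proof -
  obtain L n L' n' where L: "finite L" "finite L'"
    and x: "\<forall>w. x w \<noteq> 0 \<longrightarrow> set w \<subseteq> L \<and> length w \<le> n"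
    and y: "\<forall>w. y w \<noteq> 0 \<longrightarrow> set w \<subseteq> L' \<and> length w \<le> n'"
    using assms unfolding fin_supp_iff_bounded by metis
  have "set w \<subseteq> L \<union> L' \<and> sum_list (map (\<lambda>_. 1) w) \<le> n + n'" if "shuffle_prod x y w \<noteq> 0" for w
    by (rule shuffle_support_additive[OF _ _ that]) (use x y in \<open>auto simp: sum_list_triv\<close>)
  then show ?thesis unfolding fin_supp_iff_bounded using L by (auto simp: sum_list_triv)
qed

lemma bar_d_via_superset:
  assumes "finite S" "{c. x (u @ c # v) \<noteq> 0} \<subseteq> S"
  shows "bar_d x u a b v = x (u @ [a, b] @ v) - (\<Sum>c\<in>S. x (u @ c # v) * of_nat (ncut c a b))"
  unfolding bar_d_def by (subst sum.mono_neutral_left[OF assms]) auto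

lemma bar_d_sum:
  assumes I: "finite I" and f: "\<And>i. i \<in> I \<Longrightarrow> fin_supp (f i)"
  shows "bar_d (\<lambda>w. \<Sum>i\<in>I. f i w) u a b v = (\<Sum>i\<in>I. bar_d (f i) u a b v)"
proof -
  define S where "S = (\<Union>i\<in>I. {c. f i (u @ c # v) \<noteq> 0})"
  have S: "finite S" unfolding S_def using I f fin_supp_middle by blast
  have "bar_d (\<lambda>w. \<Sum>i\<in>I. f i w) u a b v =
      (\<Sum>i\<in>I. f i (u @ [a, b] @ v)) - (\<Sum>c\<in>S. (\<Sum>i\<in>I. f i (u @ c # v)) * of_nat (ncut c a b))"
    by (rule bar_d_via_superset[OF S]) (auto simp: S_def intro: sum.not_neutral_contains_not_neutral)
  also have "\<dots> = (\<Sum>i\<in>I. f i (u @ [a, b] @ v) - (\<Sum>c\<in>S. f i (u @ c # v) * of_nat (ncut c a b)))"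
    by (simp add: sum_subtractf sum_distrib_right sum.swap[of _ S])
  also have "\<dots> = (\<Sum>i\<in>I. bar_d (f i) u a b v)"
    by (rule sum.cong[OF refl], rule bar_d_via_superset[symmetric, OF S]) (auto simp: S_def)
  finally show ?thesis .
qed

lemma bar_d_add:
  assumes "fin_supp x" "fin_supp y"
  shows "bar_d (\<lambda>w. x w + y w) u a b v = bar_d x u a b v + bar_d y u a b v"
  using bar_d_sum[of "{True, False}" "\<lambda>i. if i then x else y" u a b v] assms by simp

lemma bar_d_scale:
  assumes "fin_supp x"
  shows "bar_d (\<lambda>w. r * x w) u a b v = r * bar_d x u a b v"
proof -
  have "bar_d (\<lambda>w. r * x w) u a b v = r * x (u @ [a, b] @ v) -
          (\<Sum>c\<in>{c. x (u @ c # v) \<noteq> 0}. r * x (u @ c # v) * of_nat (ncut c a b))"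
    by (rule bar_d_via_superset[OF fin_supp_middle[OF assms]]) auto
  then show ?thesis
    unfolding bar_d_def by (simp add: sum_distrib_left right_diff_distrib mult.assoc)
qed

lemma bar_d_lquot: "bar_d x (e # u) a b v = bar_d (lquot e x) u a b v"
  by (simp add: bar_d_def lquot_def)

text \<open>The cocycle condition defining \<open>H\<^sup>0\<close>: the coefficient of \<open>[u|a\<otimes>b|v]\<close> in the
  differential is symmetric in \<open>a\<close> and \<open>b\<close>, i.e. the differential vanishes in
  \<open>\<Lambda>\<^sup>2\<close>.\<close>

definition cocycle :: "'a bar0 \<Rightarrow> bool" where
  "cocycle x \<longleftrightarrow> (\<forall>u a b v. bar_d x u a b v = bar_d x u b a v)"

lemma cocycle_lquot: "cocycle x \<Longrightarrow> cocycle (lquot e x)"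
  by (simp add: cocycle_def bar_d_lquot[symmetric])

text \<open>The Leibniz rule for the differential of a shuffle product at the front of a word:
  besides differentiating either factor, the two new letters may come one from each factor.\<close>

lemma bar_d_shuffle_front:
  assumes fx: "fin_supp x" and fy: "fin_supp y"
  shows "bar_d (shuffle_prod x y) [] a b v =
      shuffle_prod (\<lambda>w. bar_d x [] a b w) y v + shuffle_prod x (\<lambda>w. bar_d y [] a b w) v
      + (shuffle_prod (lquot a x) (lquot b y) v + shuffle_prod (lquot b x) (lquot a y) v)"
proof -
  define L where "L = {c. \<exists>w. x (c # w) \<noteq> 0} \<union> {c. \<exists>w. y (c # w) \<noteq> 0}"
  have L: "finite L"
    unfolding L_def using fin_supp_first_letters[OF fx] fin_supp_first_letters[OF fy] by simp
  have dx: "bar_d x [] a b w = x (a # b # w) - (\<Sum>c\<in>L. x (c # w) * of_nat (ncut c a b))" for w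
    using bar_d_via_superset[OF L, of x "[]" w a b] by (auto simp: L_def)
  have dy: "bar_d y [] a b w = y (a # b # w) - (\<Sum>c\<in>L. y (c # w) * of_nat (ncut c a b))" for w
    using bar_d_via_superset[OF L, of y "[]" w a b] by (auto simp: L_def)
  have "bar_d (shuffle_prod x y) [] a b v = shuffle_prod x y (a # b # v)
      - (\<Sum>c\<in>L. shuffle_prod x y (c # v) * of_nat (ncut c a b))"
    using bar_d_via_superset[OF L, of "shuffle_prod x y" "[]" v a b]
    by (auto simp: L_def elim: shuffle_Cons_nonzero)
  also have "shuffle_prod x y (a # b # v) =
      shuffle_prod (lquot b (lquot a x)) y v + shuffle_prod (lquot a x) (lquot b y) v +
      (shuffle_prod (lquot b x) (lquot a y) v + shuffle_prod x (lquot b (lquot a y)) v)"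
    by (simp add: shuffle_Cons)
  also have "(\<Sum>c\<in>L. shuffle_prod x y (c # v) * of_nat (ncut c a b)) =
      shuffle_prod (\<lambda>w. \<Sum>c\<in>L. x (c # w) * of_nat (ncut c a b)) y v +
      shuffle_prod x (\<lambda>w. \<Sum>c\<in>L. y (c # w) * of_nat (ncut c a b)) v"
    by (simp add: shuffle_Cons sum.distrib distrib_right lquot_def shuffle_scale_left
        shuffle_scale_right shuffle_sum_left[OF L] shuffle_sum_right[OF L])
  finally show ?thesis
    unfolding dx dy shuffle_diff_left shuffle_diff_right by (simp add: lquot_def)
qed

lemma cocycle_shuffle:
  assumes "fin_supp x" "fin_supp y" "cocycle x" "cocycle y"
  shows "cocycle (shuffle_prod x y)"
  unfolding cocycle_def
proof (intro allI)
  fix u a b v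
  show "bar_d (shuffle_prod x y) u a b v = bar_d (shuffle_prod x y) u b a v"
    using assms
  proof (induction u arbitrary: x y)
    case Nil
    then have "(\<lambda>w. bar_d x [] a b w) = (\<lambda>w. bar_d x [] b a w)"
      "(\<lambda>w. bar_d y [] a b w) = (\<lambda>w. bar_d y [] b a w)" by (simp_all add: cocycle_def)
    then show ?case using Nil.prems(1,2) by (simp add: bar_d_shuffle_front)
  next
    case (Cons e u)
    have eq: "lquot e (shuffle_prod x y) =
        (\<lambda>w. shuffle_prod (lquot e x) y w + shuffle_prod x (lquot e y) w)"
      by (simp add: lquot_def fun_eq_iff shuffle_Cons)
    have fin: "fin_supp (shuffle_prod (lquot e x) y)" "fin_supp (shuffle_prod x (lquot e y))"
      using Cons.prems fin_supp_shuffle fin_supp_lquot by blast+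
    have "bar_d (shuffle_prod (lquot e x) y) u a b v = bar_d (shuffle_prod (lquot e x) y) u b a v"
      "bar_d (shuffle_prod x (lquot e y)) u a b v = bar_d (shuffle_prod x (lquot e y)) u b a v"
      using Cons.IH Cons.prems fin_supp_lquot cocycle_lquot by blast+
    then show ?case unfolding bar_d_lquot eq bar_d_add[OF fin] by simp
  qed
qed

text \<open>Working with general \<open>r\<close> lets us recurse into the pieces.\<close>

inductive_set cuts_of :: "nat list \<Rightarrow> nat list list set" for r :: "nat list" where
  base: "[r] \<in> cuts_of r"
| step: "c \<in> cuts_of r \<Longrightarrow> k < length c \<Longrightarrow> (p, q) \<in> twocuts_idx (c ! k) \<Longrightarrow>
         take k c @ [p, q] @ drop (Suc k) c \<in> cuts_of r"

lemma cuts_idx_eq: "cuts_idx L = cuts_of [0..<L]"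
proof (intro set_eqI iffI)
  fix c
  show "c \<in> cuts_idx L \<Longrightarrow> c \<in> cuts_of [0..<L]"
    by (induction rule: cuts_idx.induct) (auto intro: cuts_of.base cuts_of.step[simplified])
  show "c \<in> cuts_of [0..<L] \<Longrightarrow> c \<in> cuts_idx L"
    by (induction rule: cuts_of.induct) (auto intro: cuts_idx.base cuts_idx.step[simplified])
qed

lemma cuts_of_nonempty: "c \<in> cuts_of r \<Longrightarrow> c \<noteq> []"
  by (induction rule: cuts_of.induct) auto

lemma cuts_of_refine:
  assumes "c \<in> cuts_of x" "u @ [x] @ v \<in> cuts_of r"
  shows "u @ c @ v \<in> cuts_of r"
  using assms(1)
proof induction
  case base then show ?case using assms(2) by simp
next
  case (step c k p q)
  have "take (length u + k) (u @ c @ v) @ [p, q] @ drop (Suc (length u + k)) (u @ c @ v) \<in> cuts_of r"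
    by (rule cuts_of.step[OF step.IH]) (use step.hyps in \<open>auto simp: nth_append\<close>)
  moreover have "take (length u + k) (u @ c @ v) = u @ take k c" using step.hyps by simp
  moreover have "drop (Suc (length u + k)) (u @ c @ v) = drop (Suc k) c @ v" using step.hyps by simp
  ultimately show ?case using step.hyps by simp
qed

lemma twocuts_idx_as_image:
  "twocuts_idx p = (\<lambda>(i, j). (take (i+1) p @ drop (j+1) p, take (j - i + 2) (drop i p))) `
     {(i, j). i < j \<and> j \<le> length p - 2 \<and> (i, j) \<noteq> (0, length p - 2)}"
  unfolding twocuts_idx_def by auto

lemma finite_twocuts: "finite (twocuts_idx p)"
  unfolding twocuts_idx_as_image
  by (rule finite_imageI, rule finite_subset[of _ "{..length p} \<times> {..length p}"]) auto

lemma twocuts_map: "twocuts_idx (map f p) = (\<lambda>(x, y). (map f x, map f y)) ` twocuts_idx p"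
  unfolding twocuts_idx_as_image image_image by (simp add: case_prod_beta take_map drop_map)

lemma twocuts_subset: "(x, y) \<in> twocuts_idx p \<Longrightarrow> set x \<subseteq> set p \<and> set y \<subseteq> set p"
  unfolding twocuts_idx_def by (auto dest: in_set_takeD in_set_dropD)

text \<open>For a strictly increasing list \<open>r\<close> a 2-cut is determined by the values \<open>lo < hi\<close> at
  which it is made: the outer piece keeps the entries \<open>\<le> lo\<close> or \<open>\<ge> hi\<close>, the inner piece
  those in \<open>[lo, hi]\<close>. Describing cuts by values instead of positions makes cuts of
  pieces directly comparable with cuts of \<open>r\<close>.\<close>

definition outer :: "nat list \<Rightarrow> nat \<Rightarrow> nat \<Rightarrow> nat list" where
  "outer r lo hi = filter (\<lambda>x. x \<le> lo \<or> hi \<le> x) r"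

definition inner :: "nat list \<Rightarrow> nat \<Rightarrow> nat \<Rightarrow> nat list" where
  "inner r lo hi = filter (\<lambda>x. lo \<le> x \<and> x \<le> hi) r"

text \<open>Admissible cut values: both pieces must be generators, i.e. some entry lies strictly
  between \<open>lo\<close> and \<open>hi\<close> and some entry lies strictly outside.\<close>

definition cut_bounds :: "nat list \<Rightarrow> (nat \<times> nat) set" where
  "cut_bounds r = {(lo, hi). lo \<in> set r \<and> hi \<in> set r \<and> lo < hi \<and> (\<exists>x\<in>set r. lo < x \<and> x < hi)
              \<and> (\<exists>x\<in>set r. x < lo \<or> hi < x)}"

lemma strict_sorted_nth_less_iff:
  fixes r :: "nat list"
  assumes "sorted_wrt (<) r" "k < length r" "i < length r"
  shows "(r ! k < r ! i) = (k < i)"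
proof (cases k i rule: linorder_cases)
  case less then show ?thesis using sorted_wrt_nth_less[OF assms(1) less assms(3)] by simp
next
  case equal then show ?thesis by simp
next
  case greater then show ?thesis using sorted_wrt_nth_less[OF assms(1) greater assms(2)] by simp
qed

lemma strict_sorted_nth_le_iff:
  fixes r :: "nat list"
  assumes "sorted_wrt (<) r" "k < length r" "i < length r"
  shows "(r ! k \<le> r ! i) = (k \<le> i)"
  using strict_sorted_nth_less_iff[OF assms(1) assms(3) assms(2)] by linarith

lemma in_take_nth: "x \<in> set (take n r) \<Longrightarrow> \<exists>k. k < n \<and> k < length r \<and> x = r ! k"
  by (auto simp: in_set_conv_nth)

lemma in_drop_nth: "x \<in> set (drop n r) \<Longrightarrow> \<exists>k. n \<le> k \<and> k < length r \<and> x = r ! k"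
proof -
  assume "x \<in> set (drop n r)"
  then obtain k' where "k' < length (drop n r)" "x = drop n r ! k'" by (auto simp: in_set_conv_nth)
  then show ?thesis by (intro exI[of _ "n + k'"]) auto
qed

lemma take_drop_eq_outer:
  assumes s: "sorted_wrt (<) r" and ij: "i < j" "Suc j < length r"
  shows "take (Suc i) r @ drop (Suc j) r = outer r (r ! i) (r ! Suc j)"
proof -
  have d: "drop (j - i) (drop (Suc i) r) = drop (Suc j) r" using ij by (simp add: drop_drop)
  have r: "r = take (Suc i) r @ take (j - i) (drop (Suc i) r) @ drop (Suc j) r"
    by (simp only: d[symmetric] append_take_drop_id)
  have 1: "filter (\<lambda>x. x \<le> r ! i \<or> r ! Suc j \<le> x) (take (Suc i) r) = take (Suc i) r"
  proof (rule filter_True, intro ballI)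
    fix x assume "x \<in> set (take (Suc i) r)"
    from in_take_nth[OF this] obtain k where "k < Suc i" "k < length r" "x = r ! k" by blast
    then show "x \<le> r ! i \<or> r ! Suc j \<le> x" using strict_sorted_nth_le_iff[OF s, of k i] ij by auto
  qed
  have 2: "filter (\<lambda>x. x \<le> r ! i \<or> r ! Suc j \<le> x) (drop (Suc j) r) = drop (Suc j) r"
  proof (rule filter_True, intro ballI)
    fix x assume "x \<in> set (drop (Suc j) r)"
    from in_drop_nth[OF this] obtain k where "Suc j \<le> k" "k < length r" "x = r ! k" by blast
    then show "x \<le> r ! i \<or> r ! Suc j \<le> x" using strict_sorted_nth_le_iff[OF s, of "Suc j" k] ij by auto
  qed
  have 3: "filter (\<lambda>x. x \<le> r ! i \<or> r ! Suc j \<le> x) (take (j - i) (drop (Suc i) r)) = []"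
  proof (rule filter_False, intro ballI)
    fix x assume "x \<in> set (take (j - i) (drop (Suc i) r))"
    from in_take_nth[OF this] obtain k where k: "k < j - i" "k < length (drop (Suc i) r)" "x = drop (Suc i) r ! k"
      by blast
    then have x: "x = r ! (Suc i + k)" "Suc i + k < length r" by auto
    show "\<not> (x \<le> r ! i \<or> r ! Suc j \<le> x)"
      using strict_sorted_nth_le_iff[OF s, of "Suc i + k" i] strict_sorted_nth_le_iff[OF s, of "Suc j" "Suc i + k"] ij x k(1) by auto
  qed
  show ?thesis unfolding outer_def by (subst (3) r) (simp only: filter_append 1 2 3 append_Nil)
qed

lemma take_drop_eq_inner:
  assumes s: "sorted_wrt (<) r" and ij: "i < j" "Suc j < length r"
  shows "take (j - i + 2) (drop i r) = inner r (r ! i) (r ! Suc j)"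
proof -
  have d: "drop (j - i + 2) (drop i r) = drop (j + 2) r" using ij by (simp add: drop_drop)
  have r: "r = take i r @ take (j - i + 2) (drop i r) @ drop (j + 2) r"
    by (simp only: d[symmetric] append_take_drop_id)
  have 1: "filter (\<lambda>x. r ! i \<le> x \<and> x \<le> r ! Suc j) (take i r) = []"
  proof (rule filter_False, intro ballI)
    fix x assume "x \<in> set (take i r)"
    from in_take_nth[OF this] obtain k where "k < i" "k < length r" "x = r ! k" by blast
    then show "\<not> (r ! i \<le> x \<and> x \<le> r ! Suc j)" using strict_sorted_nth_le_iff[OF s, of i k] ij by auto
  qed
  have 2: "filter (\<lambda>x. r ! i \<le> x \<and> x \<le> r ! Suc j) (drop (j + 2) r) = []"
  proof (rule filter_False, intro ballI)
    fix x assume "x \<in> set (drop (j + 2) r)"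
    from in_drop_nth[OF this] obtain k where "j + 2 \<le> k" "k < length r" "x = r ! k" by blast
    then show "\<not> (r ! i \<le> x \<and> x \<le> r ! Suc j)" using strict_sorted_nth_le_iff[OF s, of k "Suc j"] ij by auto
  qed
  have 3: "filter (\<lambda>x. r ! i \<le> x \<and> x \<le> r ! Suc j) (take (j - i + 2) (drop i r)) = take (j - i + 2) (drop i r)"
  proof (rule filter_True, intro ballI)
    fix x assume "x \<in> set (take (j - i + 2) (drop i r))"
    from in_take_nth[OF this] obtain k where k: "k < j - i + 2" "k < length (drop i r)" "x = drop i r ! k"
      by blast
    then have x: "x = r ! (i + k)" "i + k < length r" by auto
    show "r ! i \<le> x \<and> x \<le> r ! Suc j"
      using strict_sorted_nth_le_iff[OF s, of i "i + k"] strict_sorted_nth_le_iff[OF s, of "i + k" "Suc j"] ij x k(1) by auto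
  qed
  show ?thesis unfolding inner_def by (subst (3) r) (simp only: filter_append 1 2 3 append_Nil append_Nil2)
qed

lemma twocut_positions_give_bounds:
  assumes s: "sorted_wrt (<) r" and ij: "i < j" "j \<le> length r - 2" "(i, j) \<noteq> (0, length r - 2)"
  shows "(r ! i, r ! Suc j) \<in> cut_bounds r"
  unfolding cut_bounds_def
proof (intro CollectI case_prodI conjI)
  have j: "Suc j < length r" using ij by linarith
  show "r ! i \<in> set r" "r ! Suc j \<in> set r" using j ij by auto
  show "r ! i < r ! Suc j" using strict_sorted_nth_less_iff[OF s, of i "Suc j"] j ij by auto
  show "\<exists>x\<in>set r. r ! i < x \<and> x < r ! Suc j"
    using strict_sorted_nth_less_iff[OF s, of i "Suc i"] strict_sorted_nth_less_iff[OF s, of "Suc i" "Suc j"] j ij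
    by (intro bexI[of _ "r ! Suc i"]) auto
  show "\<exists>x\<in>set r. x < r ! i \<or> r ! Suc j < x"
  proof (cases "i = 0")
    case True
    then have "Suc j < length r - 1" using ij j by auto
    then show ?thesis using strict_sorted_nth_less_iff[OF s, of "Suc j" "length r - 1"] j
      by (intro bexI[of _ "r ! (length r - 1)"]) auto
  next
    case False
    have "0 < length r" using j by linarith
    then show ?thesis using strict_sorted_nth_less_iff[OF s, of 0 i] j ij False
      by (intro bexI[of _ "r ! 0"]) auto
  qed
qed

lemma cut_bounds_give_positions:
  assumes s: "sorted_wrt (<) r" and c: "(lo, hi) \<in> cut_bounds r"
  obtains i j where "i < j" "j \<le> length r - 2" "(i, j) \<noteq> (0, length r - 2)"
    "lo = r ! i" "hi = r ! Suc j"
proof -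
  from c have lo: "lo \<in> set r" and hi: "hi \<in> set r"
    and w1: "\<exists>x\<in>set r. lo < x \<and> x < hi" and w2: "\<exists>x\<in>set r. x < lo \<or> hi < x"
    unfolding cut_bounds_def by auto
  obtain i where i: "i < length r" "r ! i = lo" using lo by (auto simp: in_set_conv_nth)
  obtain i' where i': "i' < length r" "r ! i' = hi" using hi by (auto simp: in_set_conv_nth)
  obtain k where k: "k < length r" "lo < r ! k" "r ! k < hi" using w1 by (auto simp: in_set_conv_nth)
  obtain k' where k': "k' < length r" "r ! k' < lo \<or> hi < r ! k'" using w2 by (auto simp: in_set_conv_nth)
  have "i < k" "k < i'"
    using strict_sorted_nth_less_iff[OF s i(1) k(1)] strict_sorted_nth_less_iff[OF s k(1) i'(1)] k i i'
    by simp_all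
  then have ij: "i < i' - 1" "Suc (i' - 1) = i'" "i' - 1 \<le> length r - 2" using i' by auto
  have "(i, i' - 1) \<noteq> (0, length r - 2)"
  proof
    assume "(i, i' - 1) = (0, length r - 2)"
    then have "i = 0" "i' = length r - 1" using ij by auto
    then show False
      using k' strict_sorted_nth_less_iff[OF s k'(1) i(1)] strict_sorted_nth_less_iff[OF s i'(1) k'(1)] i i'
      by auto
  qed
  then show thesis using that[of i "i' - 1"] ij i i' by simp
qed

lemma twocuts_sorted:
  assumes s: "sorted_wrt (<) r"
  shows "twocuts_idx r = (\<lambda>(lo, hi). (outer r lo hi, inner r lo hi)) ` cut_bounds r"
proof (intro equalityI subsetI)
  fix t assume "t \<in> twocuts_idx r"
  then obtain i j where ij: "i < j" "j \<le> length r - 2" "(i, j) \<noteq> (0, length r - 2)"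
    and t: "t = (take (i+1) r @ drop (j+1) r, take (j - i + 2) (drop i r))"
    unfolding twocuts_idx_def by blast
  have "t = (outer r (r ! i) (r ! Suc j), inner r (r ! i) (r ! Suc j))"
    using t take_drop_eq_outer[OF s ij(1)] take_drop_eq_inner[OF s ij(1)] ij by simp
  then show "t \<in> (\<lambda>(lo, hi). (outer r lo hi, inner r lo hi)) ` cut_bounds r"
    using twocut_positions_give_bounds[OF s ij] by force
next
  fix t assume "t \<in> (\<lambda>(lo, hi). (outer r lo hi, inner r lo hi)) ` cut_bounds r"
  then obtain lo hi where c: "(lo, hi) \<in> cut_bounds r" and t: "t = (outer r lo hi, inner r lo hi)"
    by auto
  obtain i j where ij: "i < j" "j \<le> length r - 2" "(i, j) \<noteq> (0, length r - 2)"
    and lh: "lo = r ! i" "hi = r ! Suc j"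
    using cut_bounds_give_positions[OF s c] by blast
  have "t = (take (i+1) r @ drop (j+1) r, take (j - i + 2) (drop i r))"
    using t lh take_drop_eq_outer[OF s ij(1)] take_drop_eq_inner[OF s ij(1)] ij by simp
  then show "t \<in> twocuts_idx r" unfolding twocuts_idx_def using ij by blast
qed

lemma set_outer: "set (outer r lo hi) = {x \<in> set r. x \<le> lo \<or> hi \<le> x}"
  by (auto simp: outer_def)

lemma set_inner: "set (inner r lo hi) = {x \<in> set r. lo \<le> x \<and> x \<le> hi}"
  by (auto simp: inner_def)

lemma sorted_outer: "sorted_wrt (<) r \<Longrightarrow> sorted_wrt (<) (outer r lo hi)"
  by (simp add: outer_def sorted_wrt_filter)

lemma sorted_inner: "sorted_wrt (<) r \<Longrightarrow> sorted_wrt (<) (inner r lo hi)"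
  by (simp add: inner_def sorted_wrt_filter)

lemma cut_bounds_iff: "(lo, hi) \<in> cut_bounds r \<longleftrightarrow> lo \<in> set r \<and> hi \<in> set r \<and> lo < hi \<and>
   (\<exists>x\<in>set r. lo < x \<and> x < hi) \<and> (\<exists>x\<in>set r. x < lo \<or> hi < x)"
  by (simp add: cut_bounds_def)

lemma finite_cut_bounds: "finite (cut_bounds r)"
  by (rule finite_subset[of _ "set r \<times> set r"]) (auto simp: cut_bounds_def)

lemma length_outer: "(lo, hi) \<in> cut_bounds r \<Longrightarrow> length (outer r lo hi) < length r"
  unfolding cut_bounds_iff outer_def by (auto intro: length_filter_less)

lemma inner_inj:
  assumes "(lo, hi) \<in> cut_bounds r" "(lo', hi') \<in> cut_bounds r" "inner r lo hi = inner r lo' hi'"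
  shows "lo = lo' \<and> hi = hi'"
proof -
  have "set (inner r lo hi) = set (inner r lo' hi')" using assms(3) by simp
  then have "{x \<in> set r. lo \<le> x \<and> x \<le> hi} = {x \<in> set r. lo' \<le> x \<and> x \<le> hi'}"
    by (simp add: set_inner)
  moreover have "lo \<in> set r" "hi \<in> set r" "lo' \<in> set r" "hi' \<in> set r" "lo < hi" "lo' < hi'"
    using assms(1,2) by (auto simp: cut_bounds_iff)
  ultimately show ?thesis by (metis (mono_tags, lifting) antisym mem_Collect_eq order_less_imp_le order_refl)
qed

lemma outer_outer: "outer (outer r lo hi) lo' hi' = filter (\<lambda>x. (x \<le> lo \<or> hi \<le> x) \<and> (x \<le> lo' \<or> hi' \<le> x)) r"
  by (simp add: outer_def)

lemma inner_outer: "inner (outer r lo hi) lo' hi' = filter (\<lambda>x. (x \<le> lo \<or> hi \<le> x) \<and> lo' \<le> x \<and> x \<le> hi') r"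
  by (simp add: outer_def inner_def)

lemma outer_inner: "outer (inner r lo hi) lo' hi' = filter (\<lambda>x. (lo \<le> x \<and> x \<le> hi) \<and> (x \<le> lo' \<or> hi' \<le> x)) r"
  by (simp add: outer_def inner_def)

lemma inner_inner: "inner (inner r lo hi) lo' hi' = filter (\<lambda>x. (lo \<le> x \<and> x \<le> hi) \<and> lo' \<le> x \<and> x \<le> hi') r"
  by (simp add: inner_def)

lemma cut_bounds_nested_in_inner:
  assumes "(lo, hi) \<in> cut_bounds r" "(lo2, hi2) \<in> cut_bounds (inner r lo hi)"
  shows "(lo2, hi2) \<in> cut_bounds r" "(lo, hi) \<in> cut_bounds (outer r lo2 hi2)" "lo \<le> lo2" "hi2 \<le> hi"
proof -
  from assms(1) obtain x0 y0 where h1: "lo \<in> set r" "hi \<in> set r" "lo < hi" "x0 \<in> set r" "lo < x0" "x0 < hi"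
    "y0 \<in> set r" "y0 < lo \<or> hi < y0" unfolding cut_bounds_iff by blast
  from assms(2) obtain x1 y1 where h2: "lo2 \<in> set r" "lo \<le> lo2" "lo2 \<le> hi" "hi2 \<in> set r" "lo \<le> hi2" "hi2 \<le> hi"
    "lo2 < hi2" "x1 \<in> set r" "lo2 < x1" "x1 < hi2" "y1 \<in> set r" "lo \<le> y1" "y1 \<le> hi"
    "y1 < lo2 \<or> hi2 < y1" unfolding cut_bounds_iff set_inner by blast
  show "lo \<le> lo2" "hi2 \<le> hi" using h2 by auto
  show "(lo2, hi2) \<in> cut_bounds r" unfolding cut_bounds_iff
    using h1 h2 by (intro conjI bexI[of _ x1] bexI[of _ y0]) auto
  show "(lo, hi) \<in> cut_bounds (outer r lo2 hi2)" unfolding cut_bounds_iff set_outer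
  proof (intro conjI)
    show "\<exists>x\<in>{x \<in> set r. x \<le> lo2 \<or> hi2 \<le> x}. lo < x \<and> x < hi"
    proof (cases "y1 < lo2")
      case True
      then show ?thesis using h1 h2
        by (cases "lo < y1") (auto intro!: bexI[of _ y1] bexI[of _ lo2])
    next
      case False
      then show ?thesis using h1 h2
        by (cases "y1 < hi") (auto intro!: bexI[of _ y1] bexI[of _ hi2])
    qed
  qed (use h1 h2 in auto)
qed

lemma cut_bounds_enclosing:
  assumes "(lo, hi) \<in> cut_bounds r" "(lo', hi') \<in> cut_bounds (outer r lo hi)" "lo' \<le> lo" "hi \<le> hi'"
  shows "(lo', hi') \<in> cut_bounds r" "(lo, hi) \<in> cut_bounds (inner r lo' hi')"
proof -
  from assms(1) obtain x0 y0 where h1: "lo \<in> set r" "hi \<in> set r" "lo < hi" "x0 \<in> set r" "lo < x0" "x0 < hi"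
    "y0 \<in> set r" "y0 < lo \<or> hi < y0" unfolding cut_bounds_iff by blast
  from assms(2) obtain x1 y1 where h2: "lo' \<in> set r" "hi' \<in> set r"
    "lo' < hi'" "x1 \<in> set r" "x1 \<le> lo \<or> hi \<le> x1" "lo' < x1" "x1 < hi'" "y1 \<in> set r"
    "y1 < lo' \<or> hi' < y1" unfolding cut_bounds_iff set_outer by blast
  show "(lo', hi') \<in> cut_bounds r" unfolding cut_bounds_iff
    using h1 h2 assms(3,4) by (intro conjI bexI[of _ x0] bexI[of _ y1]) auto
  show "(lo, hi) \<in> cut_bounds (inner r lo' hi')" unfolding cut_bounds_iff set_inner
  proof (intro conjI)
    show "\<exists>x\<in>{x \<in> set r. lo' \<le> x \<and> x \<le> hi'}. x < lo \<or> hi < x"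
    proof (cases "x1 \<le> lo")
      case True
      then show ?thesis using h1 h2 assms(3,4)
        by (cases "x1 = lo") (auto intro!: bexI[of _ x1] bexI[of _ lo'])
    next
      case False
      then show ?thesis using h1 h2 assms(3,4)
        by (cases "x1 = hi") (auto intro!: bexI[of _ x1] bexI[of _ hi'])
    qed
  qed (use h1 h2 assms(3,4) in auto)
qed

lemma cut_bounds_disjoint:
  assumes "(lo, hi) \<in> cut_bounds r" "(lo', hi') \<in> cut_bounds (outer r lo hi)" "hi \<le> lo' \<or> hi' \<le> lo"
  shows "(lo', hi') \<in> cut_bounds r" "(lo, hi) \<in> cut_bounds (outer r lo' hi')"
proof -
  from assms(1) obtain x0 y0 where h1: "lo \<in> set r" "hi \<in> set r" "lo < hi" "x0 \<in> set r" "lo < x0" "x0 < hi"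
    "y0 \<in> set r" "y0 < lo \<or> hi < y0" unfolding cut_bounds_iff by blast
  from assms(2) obtain x1 y1 where h2: "lo' \<in> set r" "hi' \<in> set r"
    "lo' < hi'" "x1 \<in> set r" "x1 \<le> lo \<or> hi \<le> x1" "lo' < x1" "x1 < hi'" "y1 \<in> set r"
    "y1 < lo' \<or> hi' < y1" unfolding cut_bounds_iff set_outer by blast
  show "(lo', hi') \<in> cut_bounds r" unfolding cut_bounds_iff
  proof (intro conjI)
    show "\<exists>x\<in>set r. x < lo' \<or> hi' < x"
    proof (cases "hi \<le> lo'")
      case True then show ?thesis using h1 by (intro bexI[of _ lo]) auto
    next
      case False then show ?thesis using h1 assms(3) by (intro bexI[of _ hi]) auto
    qed
  qed (use h1 h2 in auto)
  show "(lo, hi) \<in> cut_bounds (outer r lo' hi')" unfolding cut_bounds_iff set_outer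
  proof (intro conjI)
    show "\<exists>x\<in>{x \<in> set r. x \<le> lo' \<or> hi' \<le> x}. lo < x \<and> x < hi"
      using h1 assms(3) by (auto intro!: bexI[of _ x0])
    show "\<exists>x\<in>{x \<in> set r. x \<le> lo' \<or> hi' \<le> x}. x < lo \<or> hi < x"
    proof (cases "hi \<le> lo'")
      case True then show ?thesis using h1 h2 by (intro bexI[of _ hi']) auto
    next
      case False then show ?thesis using h1 h2 assms(3) by (intro bexI[of _ lo']) auto
    qed
  qed (use h1 h2 assms(3) in auto)
qed

lemma cut_bounds_cases:
  assumes "(lo, hi) \<in> cut_bounds r" "(lo', hi') \<in> cut_bounds (outer r lo hi)"
  shows "(hi \<le> lo' \<or> hi' \<le> lo) \<or> (lo' \<le> lo \<and> hi \<le> hi')"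
  using assms unfolding cut_bounds_iff set_outer by auto

lemma cuts_of_append_inner:
  assumes s: "sorted_wrt (<) r" and c: "(lo, hi) \<in> cut_bounds r" and cc: "c \<in> cuts_of (outer r lo hi)"
  shows "c @ [inner r lo hi] \<in> cuts_of r"
proof -
  have "(outer r lo hi, inner r lo hi) \<in> twocuts_idx r" using twocuts_sorted[OF s] c by force
  then have "take 0 [r] @ [outer r lo hi, inner r lo hi] @ drop (Suc 0) [r] \<in> cuts_of r"
    by (intro cuts_of.step[OF cuts_of.base]) auto
  then have "[] @ [outer r lo hi] @ [inner r lo hi] \<in> cuts_of r" by simp
  from cuts_of_refine[OF cc this] show ?thesis by simp
qed

lemma refine_last_inner_piece:
  assumes s: "sorted_wrt (<) r" and lh: "(lo, hi) \<in> cut_bounds r"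
    and c0: "c0 \<in> cuts_of (outer r lo hi)" and pq: "(p, q) \<in> twocuts_idx (inner r lo hi)"
  obtains lo2 hi2 where "(lo2, hi2) \<in> cut_bounds r" "c0 @ [p] \<in> cuts_of (outer r lo2 hi2)"
    "q = inner r lo2 hi2"
proof -
  obtain lo2 hi2 where l2: "(lo2, hi2) \<in> cut_bounds (inner r lo hi)"
    "p = outer (inner r lo hi) lo2 hi2" "q = inner (inner r lo hi) lo2 hi2"
    using pq unfolding twocuts_sorted[OF sorted_inner[OF s]] by auto
  note A = cut_bounds_nested_in_inner[OF lh l2(1)]
  have q: "q = inner r lo2 hi2" unfolding l2(3) inner_inner inner_def[of r lo2 hi2]
    by (rule filter_cong[OF refl]) (use A(3,4) in auto)
  have P2: "outer (outer r lo2 hi2) lo hi = outer r lo hi" unfolding outer_outer outer_def[of r lo hi]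
    by (rule filter_cong[OF refl]) (use A(3,4) in auto)
  have Q2: "inner (outer r lo2 hi2) lo hi = p" unfolding l2(2) inner_outer outer_inner
    by (rule filter_cong[OF refl]) auto
  have "c0 @ [p] \<in> cuts_of (outer r lo2 hi2)"
    using cuts_of_append_inner[OF sorted_outer[OF s] A(2)] c0 unfolding P2 Q2 by simp
  then show thesis using that A(1) q by blast
qed

lemma cuts_of_cases:
  assumes s: "sorted_wrt (<) r" and c: "c \<in> cuts_of r"
  shows "c = [r] \<or> (\<exists>lo hi c0. (lo, hi) \<in> cut_bounds r \<and> c0 \<in> cuts_of (outer r lo hi) \<and> c = c0 @ [inner r lo hi])"
  using c
proof induction
  case base then show ?case by simp
next
  case (step c k p q)
  from step.IH show ?case
  proof
    assume cr: "c = [r]"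
    then have "k = 0" "(p, q) \<in> twocuts_idx r" using step.hyps by simp_all
    then show ?case using cr unfolding twocuts_sorted[OF s] by (auto intro: cuts_of.base)
  next
    assume "\<exists>lo hi c0. (lo, hi) \<in> cut_bounds r \<and> c0 \<in> cuts_of (outer r lo hi) \<and> c = c0 @ [inner r lo hi]"
    then obtain lo hi c0 where lh: "(lo, hi) \<in> cut_bounds r" and c0: "c0 \<in> cuts_of (outer r lo hi)"
      and ce: "c = c0 @ [inner r lo hi]" by blast
    show ?case
    proof (cases "k < length c0")
      case True
      have "take k c0 @ [p, q] @ drop (Suc k) c0 \<in> cuts_of (outer r lo hi)"
        by (rule cuts_of.step[OF c0 True]) (use step.hyps ce True in \<open>simp add: nth_append\<close>)
      then show ?thesis using ce True lh by auto
    next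
      case False
      then have k: "k = length c0" using step.hyps ce by simp
      then have "(p, q) \<in> twocuts_idx (inner r lo hi)" using step.hyps ce by simp
      then obtain lo2 hi2 where "(lo2, hi2) \<in> cut_bounds r" "c0 @ [p] \<in> cuts_of (outer r lo2 hi2)"
        "q = inner r lo2 hi2"
        using refine_last_inner_piece[OF s lh c0] by blast
      moreover have "take k c @ [p, q] @ drop (Suc k) c = (c0 @ [p]) @ [q]" using k ce by simp
      ultimately show ?thesis by blast
    qed
  qed
qed

lemma cuts_of_decomp:
  assumes "sorted_wrt (<) r"
  shows "cuts_of r = insert [r] (\<Union>(lo, hi)\<in>cut_bounds r. (\<lambda>c0. c0 @ [inner r lo hi]) ` cuts_of (outer r lo hi))"
  using cuts_of_cases[OF assms] cuts_of_append_inner[OF assms] by (fastforce intro: cuts_of.base)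

lemma finite_cuts_of: "sorted_wrt (<) r \<Longrightarrow> finite (cuts_of r)"
proof (induction "length r" arbitrary: r rule: less_induct)
  case less
  have "finite (cuts_of (outer r lo hi))" if "(lo, hi) \<in> cut_bounds r" for lo hi
    using less.hyps[OF length_outer[OF that]] sorted_outer[OF less.prems] by blast
  then show ?case unfolding cuts_of_decomp[OF less.prems] using finite_cut_bounds by auto
qed

definition Tcut :: "'a list \<Rightarrow> nat list \<Rightarrow> 'a bar0" where
  "Tcut B r w = of_nat (card {c \<in> cuts_of r. map (sym_of B) c = w})"

lemma T_eq_Tcut: "T B = Tcut B [0..<length B]"
  by (simp add: fun_eq_iff T_def Tcut_def cuts_idx_eq)

lemma card_filter_as_sum:
  "finite A \<Longrightarrow> (of_nat (card {t \<in> A. P t}) :: rat) = (\<Sum>t\<in>A. if P t then 1 else 0)"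
  by (simp add: sum.inter_filter[symmetric])

lemma Tcut_as_sum:
  "sorted_wrt (<) r \<Longrightarrow> Tcut B r w = (\<Sum>c\<in>cuts_of r. if map (sym_of B) c = w then 1 else 0)"
  unfolding Tcut_def by (rule card_filter_as_sum[OF finite_cuts_of])

lemma Tcut_Nil: "Tcut B r [] = 0"
  using cuts_of_nonempty by (auto simp: Tcut_def)

lemma fin_supp_Tcut: "sorted_wrt (<) r \<Longrightarrow> fin_supp (Tcut B r)"
  unfolding fin_supp_def
  by (rule finite_subset[of _ "map (sym_of B) ` cuts_of r"]) (auto simp: Tcut_def finite_cuts_of)

lemma sum_cuts_of:
  assumes s: "sorted_wrt (<) r"
  shows "(\<Sum>c\<in>cuts_of r. f c) =
    f [r] + (\<Sum>(lo, hi)\<in>cut_bounds r. \<Sum>c0\<in>cuts_of (outer r lo hi). f (c0 @ [inner r lo hi]))"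
proof -
  define Y where "Y = (\<lambda>(lo, hi). (\<lambda>c0. c0 @ [inner r lo hi]) ` cuts_of (outer r lo hi))"
  have fin: "finite (Y t)" for t
    using finite_cuts_of[OF sorted_outer[OF s]] by (auto simp: Y_def split: prod.split)
  have "[r] \<notin> (\<Union>t\<in>cut_bounds r. Y t)"
    using cuts_of_nonempty by (fastforce simp: Y_def Cons_eq_append_conv)
  moreover have "\<forall>t\<in>cut_bounds r. \<forall>t'\<in>cut_bounds r. t \<noteq> t' \<longrightarrow> Y t \<inter> Y t' = {}"
    using inner_inj by (fastforce simp: Y_def)
  ultimately have "(\<Sum>c\<in>cuts_of r. f c) = f [r] + (\<Sum>t\<in>cut_bounds r. \<Sum>c\<in>Y t. f c)"
    unfolding cuts_of_decomp[OF s] Y_def[symmetric]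
    by (simp add: sum.UNION_disjoint[OF finite_cut_bounds] fin finite_cut_bounds)
  also have "(\<Sum>t\<in>cut_bounds r. \<Sum>c\<in>Y t. f c) =
      (\<Sum>(lo, hi)\<in>cut_bounds r. \<Sum>c0\<in>cuts_of (outer r lo hi). f (c0 @ [inner r lo hi]))"
    by (rule sum.cong[OF refl]) (auto simp: Y_def sum.reindex inj_on_def)
  finally show ?thesis .
qed

lemma Tcut_snoc:
  assumes s: "sorted_wrt (<) r"
  shows "Tcut B r (w @ [b]) = (if w = [] \<and> b = sym_of B r then 1 else 0) +
    (\<Sum>(lo, hi)\<in>cut_bounds r. if sym_of B (inner r lo hi) = b then Tcut B (outer r lo hi) w else 0)"
  unfolding Tcut_as_sum[OF s] sum_cuts_of[OF s]
  by (auto simp: Tcut_as_sum[OF sorted_outer[OF s]] sym_of_def intro!: sum.cong)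

lemma sym_of_sym_of:
  "set x \<subseteq> {..<length C} \<Longrightarrow> sym_of (sym_of B C) x = sym_of B (map (\<lambda>i. C ! i) x)"
  unfolding sym_of_def by (auto simp: subset_iff)

lemma ncut_sym_of:
  assumes "distinct C"
  shows "ncut (sym_of B C) a b = card {t \<in> twocuts_idx C. sym_of B (fst t) = a \<and> sym_of B (snd t) = b}"
proof -
  define n where "n = length C"
  define pm where "pm = (\<lambda>(x::nat list, y::nat list). (map (\<lambda>i. C ! i) x, map (\<lambda>i. C ! i) y))"
  define P where "P = (\<lambda>t. sym_of B (fst t) = a \<and> sym_of B (snd t) = b)"
  have idx: "set x \<subseteq> {..<n} \<and> set y \<subseteq> {..<n}" if "(x, y) \<in> twocuts_idx [0..<n]" for x y
    using twocuts_subset[OF that] by auto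
  have tc: "twocuts_idx C = pm ` twocuts_idx [0..<n]"
    using twocuts_map[of "\<lambda>i. C ! i" "[0..<n]"] unfolding n_def map_nth pm_def .
  have "inj_on (\<lambda>i. C ! i) {..<n}"
    using assms unfolding n_def by (simp add: inj_on_def nth_eq_iff_index_eq)
  then have "x = y" if "set x \<subseteq> {..<n}" "set y \<subseteq> {..<n}" "map (\<lambda>i. C ! i) x = map (\<lambda>i. C ! i) y" for x y
    using that inj_on_map_eq_map[of "\<lambda>i. C ! i" x y] inj_on_subset[of _ "{..<n}" "set x \<union> set y"] by auto
  then have inj: "inj_on pm (twocuts_idx [0..<n])"
    by (intro inj_onI) (auto simp: pm_def dest!: idx)
  have eq: "sym_of (sym_of B C) x = sym_of B (fst (pm (x, y)))"
    "sym_of (sym_of B C) y = sym_of B (snd (pm (x, y)))" if "(x, y) \<in> twocuts_idx [0..<n]" for x y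
    using idx[OF that] sym_of_sym_of unfolding pm_def n_def by auto
  have "ncut (sym_of B C) a b = card {t \<in> twocuts_idx [0..<n]. P (pm t)}"
    unfolding ncut_def P_def length_map sym_of_def[of B C] n_def[symmetric]
    by (rule arg_cong[where f=card]) (force simp: eq[unfolded sym_of_def[of B C]])
  also have "\<dots> = card (pm ` {t \<in> twocuts_idx [0..<n]. P (pm t)})"
    by (rule card_image[symmetric]) (rule inj_on_subset[OF inj], auto)
  also have "pm ` {t \<in> twocuts_idx [0..<n]. P (pm t)} = {t \<in> twocuts_idx C. P t}"
    unfolding tc by auto
  finally show ?thesis by (simp add: P_def)
qed

lemma ncut_sorted:
  assumes s: "sorted_wrt (<) C"
  shows "(of_nat (ncut (sym_of B C) a b) :: rat) =
    (\<Sum>(l2, h2)\<in>cut_bounds C. if sym_of B (outer C l2 h2) = a \<and> sym_of B (inner C l2 h2) = b then 1 else 0)"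
proof -
  have inj: "inj_on (\<lambda>(lo, hi). (outer C lo hi, inner C lo hi)) (cut_bounds C)"
    by (rule inj_onI) (use inner_inj in \<open>auto simp: case_prod_beta\<close>)
  have "distinct C" using s by (simp add: strict_sorted_iff)
  then have "(of_nat (ncut (sym_of B C) a b) :: rat) =
      (\<Sum>t\<in>twocuts_idx C. if sym_of B (fst t) = a \<and> sym_of B (snd t) = b then 1 else 0)"
    by (simp add: ncut_sym_of card_filter_as_sum[OF finite_twocuts])
  then show ?thesis
    unfolding twocuts_sorted[OF s] by (subst (asm) sum.reindex[OF inj]) (simp add: case_prod_beta)
qed

text \<open>Its differential pairs the cuts
  ending in \<open>[\<dots>|a|b]\<close> with the cuts ending in \<open>[\<dots>|c]\<close> where \<open>c\<close> has a 2-cut \<open>(a, b)\<close>.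
  Both are indexed by two successive 2-cuts of \<open>r\<close>: the second one is made on the outer
  piece of the first (\<open>outer_pairs\<close>), resp. on its inner piece (\<open>inner_pairs\<close>).\<close>

definition outer_pairs :: "nat list \<Rightarrow> ((nat \<times> nat) \<times> (nat \<times> nat)) set" where
  "outer_pairs r = Sigma (cut_bounds r) (\<lambda>(lo, hi). cut_bounds (outer r lo hi))"

definition inner_pairs :: "nat list \<Rightarrow> ((nat \<times> nat) \<times> (nat \<times> nat)) set" where
  "inner_pairs r = Sigma (cut_bounds r) (\<lambda>(lo, hi). cut_bounds (inner r lo hi))"

definition last_two_coeff ::
    "'a list \<Rightarrow> nat list \<Rightarrow> 'a list list \<Rightarrow> 'a list \<Rightarrow> 'a list \<Rightarrow> (nat \<times> nat) \<times> (nat \<times> nat) \<Rightarrow> rat" where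
  "last_two_coeff B r u a b = (\<lambda>((lo, hi), (l', h')).
     if sym_of B (inner r lo hi) = b \<and> sym_of B (inner (outer r lo hi) l' h') = a
     then Tcut B (outer (outer r lo hi) l' h') u else 0)"

definition contract_coeff ::
    "'a list \<Rightarrow> nat list \<Rightarrow> 'a list list \<Rightarrow> 'a list \<Rightarrow> 'a list \<Rightarrow> (nat \<times> nat) \<times> (nat \<times> nat) \<Rightarrow> rat" where
  "contract_coeff B r u a b = (\<lambda>((lo, hi), (l2, h2)).
     if sym_of B (outer (inner r lo hi) l2 h2) = a \<and> sym_of B (inner (inner r lo hi) l2 h2) = b
     then Tcut B (outer r lo hi) u else 0)"

text \<open>A pair of successive cuts is separated if the second cut is disjoint from the first;
  otherwise (by \<open>cut_bounds_cases\<close>) it encloses the first.\<close>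

definition separated :: "(nat \<times> nat) \<times> (nat \<times> nat) \<Rightarrow> bool" where
  "separated = (\<lambda>((lo, hi), (l', h')). hi \<le> l' \<or> h' \<le> lo)"

lemma finite_outer_pairs: "finite (outer_pairs r)"
  unfolding outer_pairs_def by (auto simp: finite_cut_bounds)

lemma sum_Sigma_pairs:
  assumes "finite A" "\<And>x. x \<in> A \<Longrightarrow> finite (G x)"
  shows "(\<Sum>x\<in>A. \<Sum>y\<in>G x. f (x, y)) = sum f (Sigma A G)"
  using sum.Sigma[OF assms(1), of G "\<lambda>x y. f (x, y)"] assms(2) by simp

lemma sum_pairs:
  "(\<Sum>(lo, hi)\<in>cut_bounds r. \<Sum>t'\<in>cut_bounds (g lo hi). f ((lo, hi), t')) =
   sum f (Sigma (cut_bounds r) (\<lambda>(lo, hi). cut_bounds (g lo hi)))"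
proof -
  have "(\<Sum>(lo, hi)\<in>cut_bounds r. \<Sum>t'\<in>cut_bounds (g lo hi). f ((lo, hi), t')) =
      (\<Sum>x\<in>cut_bounds r. \<Sum>y\<in>(\<lambda>(lo, hi). cut_bounds (g lo hi)) x. f (x, y))"
    by (rule sum.cong) auto
  also have "\<dots> = sum f (Sigma (cut_bounds r) (\<lambda>(lo, hi). cut_bounds (g lo hi)))"
    by (rule sum_Sigma_pairs) (auto simp: finite_cut_bounds)
  finally show ?thesis .
qed

lemma Tcut_snoc_snoc:
  assumes s: "sorted_wrt (<) r"
  shows "Tcut B r (u @ [a, b]) =
    (if u = [] then of_nat (ncut (sym_of B r) a b) else 0) + sum (last_two_coeff B r u a b) (outer_pairs r)"
proof -
  have "Tcut B r (u @ [a, b]) =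
      (\<Sum>(lo, hi)\<in>cut_bounds r. (if sym_of B (inner r lo hi) = b \<and> u = [] \<and> a = sym_of B (outer r lo hi) then 1 else 0)
         + (\<Sum>t'\<in>cut_bounds (outer r lo hi). last_two_coeff B r u a b ((lo, hi), t')))"
    using Tcut_snoc[OF s, of B "u @ [a]" b] unfolding Tcut_snoc[OF sorted_outer[OF s]]
    by (auto simp: last_two_coeff_def sum.distrib if_distrib case_prod_beta cong: if_cong intro!: sum.cong)
  also have "\<dots> = (\<Sum>(lo, hi)\<in>cut_bounds r.
        if sym_of B (inner r lo hi) = b \<and> u = [] \<and> a = sym_of B (outer r lo hi) then 1 else 0)
      + (\<Sum>(lo, hi)\<in>cut_bounds r. \<Sum>t'\<in>cut_bounds (outer r lo hi). last_two_coeff B r u a b ((lo, hi), t'))"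
    by (simp add: sum.distrib case_prod_beta)
  also have "(\<Sum>(lo, hi)\<in>cut_bounds r.
        if sym_of B (inner r lo hi) = b \<and> u = [] \<and> a = sym_of B (outer r lo hi) then 1 else 0)
      = (if u = [] then of_nat (ncut (sym_of B r) a b) else (0::rat))"
    unfolding ncut_sorted[OF s] by (auto intro!: sum.cong)
  also have "(\<Sum>(lo, hi)\<in>cut_bounds r. \<Sum>t'\<in>cut_bounds (outer r lo hi). last_two_coeff B r u a b ((lo, hi), t'))
      = sum (last_two_coeff B r u a b) (outer_pairs r)"
    unfolding outer_pairs_def by (rule sum_pairs)
  finally show ?thesis .
qed

lemma sum_Tcut_ncut:
  assumes s: "sorted_wrt (<) r" and S: "finite S" "sym_of B r \<in> S"
    "\<And>lo hi. (lo, hi) \<in> cut_bounds r \<Longrightarrow> sym_of B (inner r lo hi) \<in> S"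
  shows "(\<Sum>c\<in>S. Tcut B r (u @ [c]) * of_nat (ncut c a b)) =
    (if u = [] then of_nat (ncut (sym_of B r) a b) else 0) + sum (contract_coeff B r u a b) (inner_pairs r)"
proof -
  have "(\<Sum>c\<in>S. Tcut B r (u @ [c]) * of_nat (ncut c a b)) =
      (\<Sum>c\<in>S. (if u = [] \<and> c = sym_of B r then of_nat (ncut c a b) else 0) +
        (\<Sum>(lo, hi)\<in>cut_bounds r. if sym_of B (inner r lo hi) = c
           then Tcut B (outer r lo hi) u * of_nat (ncut c a b) else 0))"
    by (rule sum.cong[OF refl])
      (auto simp: Tcut_snoc[OF s] distrib_right sum_distrib_right case_prod_beta intro!: sum.cong)
  also have "\<dots> = (\<Sum>c\<in>S. if u = [] \<and> c = sym_of B r then of_nat (ncut c a b) else 0) +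
      (\<Sum>(lo, hi)\<in>cut_bounds r. \<Sum>c\<in>S. if sym_of B (inner r lo hi) = c
         then Tcut B (outer r lo hi) u * of_nat (ncut c a b) else 0)"
    by (simp add: sum.distrib sum.swap[of _ S] case_prod_beta)
  also have "\<dots> = (if u = [] then of_nat (ncut (sym_of B r) a b) else 0) +
      (\<Sum>(lo, hi)\<in>cut_bounds r. Tcut B (outer r lo hi) u * of_nat (ncut (sym_of B (inner r lo hi)) a b))"
    using S by (auto simp: sum.delta' intro!: sum.cong)
  also have "(\<Sum>(lo, hi)\<in>cut_bounds r. Tcut B (outer r lo hi) u * of_nat (ncut (sym_of B (inner r lo hi)) a b))
      = sum (contract_coeff B r u a b) (inner_pairs r)"
    unfolding inner_pairs_def sum_pairs[symmetric] ncut_sorted[OF sorted_inner[OF s]] sum_distrib_left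
    by (auto simp: contract_coeff_def intro!: sum.cong)
  finally show ?thesis .
qed

lemma bar_d_Tcut_end:
  assumes s: "sorted_wrt (<) r"
  shows "bar_d (Tcut B r) u a b [] =
    sum (last_two_coeff B r u a b) (outer_pairs r) - sum (contract_coeff B r u a b) (inner_pairs r)"
proof -
  define S where "S = insert (sym_of B r) ((\<lambda>(lo, hi). sym_of B (inner r lo hi)) ` cut_bounds r)
      \<union> {c. Tcut B r (u @ c # []) \<noteq> 0}"
  have S: "finite S"
    unfolding S_def using finite_cut_bounds fin_supp_middle[OF fin_supp_Tcut[OF s]] by auto
  have "bar_d (Tcut B r) u a b [] =
      Tcut B r (u @ [a, b]) - (\<Sum>c\<in>S. Tcut B r (u @ [c]) * of_nat (ncut c a b))"
    by (rule bar_d_via_superset[OF S, of "Tcut B r" u "[]" a b, simplified]) (auto simp: S_def)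
  also have "(\<Sum>c\<in>S. Tcut B r (u @ [c]) * of_nat (ncut c a b)) =
      (if u = [] then of_nat (ncut (sym_of B r) a b) else 0) + sum (contract_coeff B r u a b) (inner_pairs r)"
    by (rule sum_Tcut_ncut[OF s S]) (auto simp: S_def)
  finally show ?thesis unfolding Tcut_snoc_snoc[OF s] by simp
qed

lemma mem_outer_pairs:
  "((lo, hi), (l', h')) \<in> outer_pairs r \<longleftrightarrow> (lo, hi) \<in> cut_bounds r \<and> (l', h') \<in> cut_bounds (outer r lo hi)"
  by (simp add: outer_pairs_def)

lemma mem_inner_pairs:
  "((lo, hi), (l', h')) \<in> inner_pairs r \<longleftrightarrow> (lo, hi) \<in> cut_bounds r \<and> (l', h') \<in> cut_bounds (inner r lo hi)"
  by (simp add: inner_pairs_def)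

text \<open>Non-separated pairs: cutting \<open>[lo, hi]\<close> and then an enclosing \<open>[l', h']\<close> from the outer
  piece is the same as cutting \<open>[l', h']\<close> and then \<open>[lo, hi]\<close> inside its inner piece. These
  terms of the differential cancel exactly against the contraction terms.\<close>

lemma nested_pairs_sum:
  assumes s: "sorted_wrt (<) r"
  shows "sum (last_two_coeff B r u a b) {x \<in> outer_pairs r. \<not> separated x} =
    sum (contract_coeff B r u a b) (inner_pairs r)"
proof (rule sum.reindex_bij_witness[where i=prod.swap and j=prod.swap])
  fix x assume "x \<in> {x \<in> outer_pairs r. \<not> separated x}"
  moreover obtain lo hi l' h' where xx: "x = ((lo, hi), (l', h'))" by (metis prod.exhaust)
  ultimately have c1: "(lo, hi) \<in> cut_bounds r" "(l', h') \<in> cut_bounds (outer r lo hi)"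
    and ni: "\<not> (hi \<le> l' \<or> h' \<le> lo)"
    by (simp_all add: separated_def mem_outer_pairs)
  have nest: "l' \<le> lo" "hi \<le> h'" using cut_bounds_cases[OF c1] ni by auto
  note enc = cut_bounds_enclosing[OF c1 nest]
  have lh: "lo < hi" using c1(1) by (simp add: cut_bounds_iff)
  show "prod.swap (prod.swap x) = x" by simp
  show "prod.swap x \<in> inner_pairs r" using enc by (simp add: xx mem_inner_pairs)
  have "outer (inner r l' h') lo hi = inner (outer r lo hi) l' h'"
    unfolding outer_inner inner_outer by (rule filter_cong) auto
  moreover have "inner (inner r l' h') lo hi = inner r lo hi"
    unfolding inner_inner inner_def[of r lo hi] by (rule filter_cong) (use nest in auto)
  moreover have "outer r l' h' = outer (outer r lo hi) l' h'"
    unfolding outer_outer outer_def[of r l' h'] by (rule filter_cong) (use nest lh in auto)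
  ultimately show "contract_coeff B r u a b (prod.swap x) = last_two_coeff B r u a b x"
    unfolding xx contract_coeff_def last_two_coeff_def by (simp add: conj_commute)
next
  fix y assume "y \<in> inner_pairs r"
  moreover obtain l' h' lo hi where yy: "y = ((l', h'), (lo, hi))" by (metis prod.exhaust)
  ultimately have c2: "(l', h') \<in> cut_bounds r" "(lo, hi) \<in> cut_bounds (inner r l' h')"
    by (simp_all add: mem_inner_pairs)
  note nested = cut_bounds_nested_in_inner[OF c2]
  have "lo < hi" using nested(1) by (simp add: cut_bounds_iff)
  then show "prod.swap (prod.swap y) = y" "prod.swap y \<in> {x \<in> outer_pairs r. \<not> separated x}"
    using nested by (auto simp: yy mem_outer_pairs separated_def)
qed

text \<open>Separated pairs: two disjoint cuts may be performed in either order, which exchanges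
  the roles of \<open>a\<close> and \<open>b\<close>.\<close>

lemma separated_pairs_sum:
  assumes s: "sorted_wrt (<) r"
  shows "sum (last_two_coeff B r u a b) {x \<in> outer_pairs r. separated x} =
    sum (last_two_coeff B r u b a) {x \<in> outer_pairs r. separated x}"
proof -
  define P where "P = {x \<in> outer_pairs r. separated x}"
  have swap: "prod.swap x \<in> P \<and> last_two_coeff B r u b a (prod.swap x) = last_two_coeff B r u a b x"
    if "x \<in> P" for x
  proof -
    obtain lo hi l' h' where xx: "x = ((lo, hi), (l', h'))" by (metis prod.exhaust)
    then have c1: "(lo, hi) \<in> cut_bounds r" "(l', h') \<in> cut_bounds (outer r lo hi)"
      and sep: "hi \<le> l' \<or> h' \<le> lo"
      using that by (simp_all add: P_def separated_def mem_outer_pairs)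
    note disj = cut_bounds_disjoint[OF c1 sep]
    have lh: "lo < hi" "l' < h'" using c1(1) disj(1) by (simp_all add: cut_bounds_iff)
    have "inner (outer r lo hi) l' h' = inner r l' h'"
      unfolding inner_outer inner_def[of r l' h'] by (rule filter_cong) (use sep lh in auto)
    moreover have "inner (outer r l' h') lo hi = inner r lo hi"
      unfolding inner_outer inner_def[of r lo hi] by (rule filter_cong) (use sep lh in auto)
    moreover have "outer (outer r l' h') lo hi = outer (outer r lo hi) l' h'"
      unfolding outer_outer by (rule filter_cong) auto
    ultimately show ?thesis
      using disj sep unfolding xx last_two_coeff_def
      by (auto simp: P_def mem_outer_pairs separated_def conj_commute)
  qed
  show ?thesis unfolding P_def[symmetric]
    by (rule sum.reindex_bij_witness[where i=prod.swap and j=prod.swap]) (use swap in auto)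
qed

lemma bar_d_Tcut_end_symmetric:
  assumes s: "sorted_wrt (<) r"
  shows "bar_d (Tcut B r) u a b [] = bar_d (Tcut B r) u b a []"
proof -
  have split: "sum h (outer_pairs r) = sum h {x \<in> outer_pairs r. separated x} + sum h {x \<in> outer_pairs r. \<not> separated x}"
    for h :: "_ \<Rightarrow> rat"
    using finite_outer_pairs by (subst sum.union_disjoint[symmetric]) (auto intro: sum.cong)
  show ?thesis
    unfolding bar_d_Tcut_end[OF s] split nested_pairs_sum[OF s] separated_pairs_sum[OF s, of B u a b]
    by simp
qed

text \<open>Right quotient by a letter; \<open>Tcut_snoc\<close> expresses right quotients of \<open>Tcut B r\<close> by
  \<open>Tcut\<close> of outer pieces, which allows an induction on the end of the word.\<close>

definition rquot :: "'a list \<Rightarrow> 'a bar0 \<Rightarrow> 'a bar0" where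
  "rquot e x = (\<lambda>w. x (w @ [e]))"

lemma bar_d_rquot: "bar_d x u a b (v @ [e]) = bar_d (rquot e x) u a b v"
  by (simp add: bar_d_def rquot_def)

lemma cocycle_Tcut:
  assumes s: "sorted_wrt (<) r"
  shows "cocycle (Tcut B r)"
  unfolding cocycle_def
proof (intro allI)
  fix u a b v
  show "bar_d (Tcut B r) u a b v = bar_d (Tcut B r) u b a v"
    using s
  proof (induction v arbitrary: r rule: rev_induct)
    case Nil then show ?case by (rule bar_d_Tcut_end_symmetric)
  next
    case (snoc e v)
    define F where "F = (\<lambda>(lo, hi). if sym_of B (inner r lo hi) = e then Tcut B (outer r lo hi) else (\<lambda>_. 0))"
    define \<delta> where "\<delta> = (\<lambda>w::'a list list. if w = [] \<and> e = sym_of B r then 1 else (0::rat))"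
    have eq: "rquot e (Tcut B r) = (\<lambda>w. \<delta> w + (\<Sum>t\<in>cut_bounds r. F t w))"
      unfolding rquot_def \<delta>_def F_def fun_eq_iff Tcut_snoc[OF snoc.prems]
      by (auto simp: case_prod_beta intro!: sum.cong)
    have fF: "fin_supp (F t)" for t
      using fin_supp_Tcut[OF sorted_outer[OF snoc.prems]] by (auto simp: F_def fin_supp_def case_prod_beta)
    have f\<delta>: "fin_supp \<delta>" unfolding fin_supp_def \<delta>_def by (rule finite_subset[of _ "{[]}"]) auto
    have bd: "bar_d (rquot e (Tcut B r)) u a b v = (\<Sum>t\<in>cut_bounds r. bar_d (F t) u a b v)" for a b
      unfolding eq bar_d_add[OF f\<delta> fin_supp_sum[OF finite_cut_bounds fF]] bar_d_sum[OF finite_cut_bounds fF]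
      by (simp add: \<delta>_def bar_d_def)
    have "bar_d (F t) u a b v = bar_d (F t) u b a v" for t
      using snoc.IH[OF sorted_outer[OF snoc.prems]] by (auto simp: F_def case_prod_beta bar_d_def)
    then show ?case unfolding bar_d_rquot bd by simp
  qed
qed

definition weight :: "'a list list \<Rightarrow> nat" where
  "weight w = sum_list (map (\<lambda>e. length e - 2) w)"

lemma weight_Cons: "weight (a # w) = (length a - 2) + weight w"
  by (simp add: weight_def)

lemma length_le_weight: "\<forall>e\<in>set w. length e \<ge> 3 \<Longrightarrow> length w \<le> weight w"
  by (induction w) (auto simp: weight_def)

lemma twocuts_length:
  assumes "(p, q) \<in> twocuts_idx e"
  shows "length p + length q = length e + 2" "length p \<ge> 3" "length q \<ge> 3"
proof -
  from assms obtain i j where ij: "i < j" "j \<le> length e - 2" "(i, j) \<noteq> (0, length e - 2)"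
    and t: "p = take (i+1) e @ drop (j+1) e" "q = take (j - i + 2) (drop i e)"
    unfolding twocuts_idx_def by blast
  have lp: "length p = (i + 1) + (length e - (j + 1))" and lq: "length q = j - i + 2"
    using t ij by auto
  show "length p + length q = length e + 2" using lp lq ij by auto
  show "length p \<ge> 3" using lp ij by (cases "i = 0") auto
  show "length q \<ge> 3" using lq ij by auto
qed

lemma cuts_of_weight:
  assumes "c \<in> cuts_of r" "length r \<ge> 3"
  shows "(\<forall>e\<in>set c. length e \<ge> 3) \<and> weight c = length r - 2"
  using assms(1)
proof induction
  case base then show ?case using assms(2) by (simp add: weight_def)
next
  case (step c k p q)
  have ck: "c = take k c @ [c ! k] @ drop (Suc k) c" using step.hyps(2) by (simp add: id_take_nth_drop)
  note l = twocuts_length[OF step.hyps(3)]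
  have "c ! k \<in> set c" using step.hyps(2) by simp
  then have ck3: "length (c ! k) \<ge> 3" using step.IH by blast
  have "\<forall>e\<in>set (take k c @ [p, q] @ drop (Suc k) c). 3 \<le> length e"
    using step.IH l by (auto dest: in_set_takeD in_set_dropD)
  moreover have "weight c = weight (take k c) + (length (c ! k) - 2) + weight (drop (Suc k) c)"
    by (subst ck) (simp add: weight_def)
  moreover have "weight (take k c @ [p, q] @ drop (Suc k) c) =
      weight (take k c) + (length p - 2) + (length q - 2) + weight (drop (Suc k) c)"
    by (simp add: weight_def)
  ultimately show ?case using step.IH l ck3 by arith
qed

lemma cuts_of_map: "c \<in> cuts_of p \<Longrightarrow> map (map f) c \<in> cuts_of (map f p)"
proof (induction rule: cuts_of.induct)
  case base then show ?case using cuts_of.base by fastforce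
next
  case (step c k p' q)
  have "(map f p', map f q) \<in> twocuts_idx (map (map f) c ! k)"
    using step.hyps twocuts_map[of f "c ! k"] by force
  from cuts_of.step[OF step.IH _ this] step.hyps show ?case by (simp add: take_map drop_map)
qed

lemma cuts_of_set: "c \<in> cuts_of r \<Longrightarrow> e \<in> set c \<Longrightarrow> set e \<subseteq> set r"
proof (induction arbitrary: e rule: cuts_of.induct)
  case base then show ?case by simp
next
  case (step c k p q)
  have "set p \<subseteq> set (c ! k)" "set q \<subseteq> set (c ! k)" "c ! k \<in> set c"
    using twocuts_subset[OF step.hyps(3)] step.hyps(2) by auto
  then show ?case using step.prems step.IH by (auto dest: in_set_takeD in_set_dropD)
qed

lemma finite_pieces: "finite (pieces A)"
proof -
  have "pieces A \<subseteq> sym_of A ` (\<Union>c\<in>cuts_of [0..<length A]. set c)"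
    unfolding pieces_def cuts_idx_eq by auto
  moreover have "finite (cuts_of [0..<length A])" by (rule finite_cuts_of) simp
  ultimately show ?thesis by (meson finite_UN_I finite_imageI finite_set finite_subset)
qed

lemma pieces_length:
  assumes "length A \<ge> 3" "B \<in> pieces A" shows "length B \<ge> 3"
proof -
  from assms(2) obtain c q where "c \<in> cuts_of [0..<length A]" "q \<in> set c" "B = sym_of A q"
    unfolding pieces_def cuts_idx_eq by auto
  then show ?thesis using cuts_of_weight[of c "[0..<length A]"] assms(1) by (auto simp: sym_of_def)
qed

text \<open>Pieces of cuts of pieces are pieces: cut the piece inside the cut it belongs to.\<close>

lemma pieces_of_pieces:
  assumes B: "B \<in> pieces A" and c: "c \<in> cuts_of [0..<length B]" and e: "e \<in> set c"
  shows "sym_of B e \<in> pieces A"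
proof -
  from B obtain c0 q where c0: "c0 \<in> cuts_of [0..<length A]" "q \<in> set c0" and Bq: "B = sym_of A q"
    unfolding pieces_def cuts_idx_eq by auto
  have n: "length B = length q" using Bq by (simp add: sym_of_def)
  obtain k where k: "k < length c0" "c0 ! k = q" using c0(2) by (auto simp: in_set_conv_nth)
  have c0e: "take k c0 @ [q] @ drop (Suc k) c0 \<in> cuts_of [0..<length A]"
    using c0(1) k id_take_nth_drop[OF k(1)] by simp
  have "map (map (\<lambda>i. q ! i)) c \<in> cuts_of q"
    using cuts_of_map[OF c, of "\<lambda>i. q ! i"] unfolding n map_nth .
  from cuts_of_refine[OF this c0e]
  have big: "take k c0 @ map (map (\<lambda>i. q ! i)) c @ drop (Suc k) c0 \<in> cuts_of [0..<length A]" .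
  have "set e \<subseteq> {..<length q}" using cuts_of_set[OF c e] n by auto
  then have "sym_of B e = sym_of A (map (\<lambda>i. q ! i) e)"
    unfolding Bq sym_of_def by (auto simp: subset_iff)
  then show ?thesis unfolding pieces_def cuts_idx_eq using big e by fastforce
qed

lemma T_nonzero_cut:
  assumes "T B w \<noteq> 0"
  obtains c where "c \<in> cuts_of [0..<length B]" "w = map (sym_of B) c"
  using assms unfolding T_def cuts_idx_eq by (metis (mono_tags, lifting) Collect_empty_eq card.empty of_nat_0)

lemma T_support:
  assumes "B \<in> pieces A" "T B w \<noteq> 0"
  shows "set w \<subseteq> pieces A"
  using assms(2) by (rule T_nonzero_cut) (use pieces_of_pieces[OF assms(1)] in auto)

lemma T_weight:
  assumes "length B \<ge> 3" "T B w \<noteq> 0"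
  shows "weight w = length B - 2"
proof -
  obtain c where c: "c \<in> cuts_of [0..<length B]" "w = map (sym_of B) c"
    using assms(2) by (rule T_nonzero_cut)
  then show ?thesis
    using cuts_of_weight[OF c(1)] assms(1) by (simp add: weight_def o_def sym_of_def)
qed

lemma T_Nil: "T B [] = 0"
  unfolding T_eq_Tcut by (rule Tcut_Nil)

lemma T_single: "T B [c] = (if c = B then 1 else 0)"
proof -
  have "T B ([] @ [c]) = (if c = sym_of B [0..<length B] then 1 else 0)"
    unfolding T_eq_Tcut Tcut_snoc[OF sorted_wrt_upt]
    by (auto simp: Tcut_Nil case_prod_beta intro!: sum.neutral)
  then show ?thesis by (simp add: sym_of_def map_nth)
qed

lemma cocycle_T: "cocycle (T B)"
  unfolding T_eq_Tcut by (rule cocycle_Tcut) simp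

lemma fin_supp_T: "fin_supp (T B)"
  unfolding T_eq_Tcut by (rule fin_supp_Tcut) simp

lemma H0_iff: "x \<in> H0 A \<longleftrightarrow> fin_supp x \<and> (\<forall>w. x w \<noteq> 0 \<longrightarrow> set w \<subseteq> pieces A) \<and> cocycle x"
  unfolding H0_def bar0_space_def cocycle_def fin_supp_def by auto

lemma H0_add:
  assumes "x \<in> H0 A" "y \<in> H0 A"
  shows "(\<lambda>w. x w + y w) \<in> H0 A"
proof -
  have "\<forall>w. x w + y w \<noteq> 0 \<longrightarrow> set w \<subseteq> pieces A"
    using assms unfolding H0_iff by (metis add.right_neutral add_0)
  then show ?thesis using assms unfolding H0_iff cocycle_def by (simp add: fin_supp_add bar_d_add)
qed

lemma H0_scale: "x \<in> H0 A \<Longrightarrow> (\<lambda>w. r * x w) \<in> H0 A"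
  unfolding H0_iff cocycle_def by (auto simp: fin_supp_scale bar_d_scale)

lemma H0_sum: "finite I \<Longrightarrow> (\<And>i. i \<in> I \<Longrightarrow> f i \<in> H0 A) \<Longrightarrow> (\<lambda>w. \<Sum>i\<in>I. f i w) \<in> H0 A"
proof (induction I rule: finite_induct)
  case empty
  have "(\<lambda>_. 0) \<in> H0 A" unfolding H0_iff cocycle_def fin_supp_def by (simp add: bar_d_def)
  then show ?case by simp
next
  case (insert a I)
  then show ?case using H0_add[of "f a" A "\<lambda>w. \<Sum>i\<in>I. f i w"] by simp
qed

lemma H0_shuffle: "x \<in> H0 A \<Longrightarrow> y \<in> H0 A \<Longrightarrow> shuffle_prod x y \<in> H0 A"
  unfolding H0_iff
  using shuffle_support_additive[of x "pieces A" "\<lambda>_. 0" 0 y 0] by (auto simp: fin_supp_shuffle cocycle_shuffle)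

lemma H0_one: "bar_one \<in> H0 A"
  unfolding H0_iff cocycle_def fin_supp_def
  by (auto simp: bar_one_def bar_d_def intro: finite_subset[of _ "{[]}"])

lemma H0_T: "B \<in> pieces A \<Longrightarrow> T B \<in> H0 A"
  unfolding H0_iff using cocycle_T fin_supp_T T_support by blast

lemma H0_lquot: "x \<in> H0 A \<Longrightarrow> lquot B x \<in> H0 A"
  unfolding H0_iff by (simp add: fin_supp_lquot cocycle_lquot) (force simp: lquot_def)

abbreviation TAlg :: "'a list \<Rightarrow> 'a bar0 set" where
  "TAlg A \<equiv> subalg_gen {T B | B. B \<in> pieces A}"

lemma TAlg_subset_H0: "x \<in> TAlg A \<Longrightarrow> x \<in> H0 A"
  by (induction rule: subalg_gen.induct) (auto intro: H0_T H0_one H0_add H0_scale H0_shuffle)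

lemma TAlg_sum: "finite I \<Longrightarrow> (\<And>i. i \<in> I \<Longrightarrow> f i \<in> TAlg A) \<Longrightarrow> (\<lambda>w. \<Sum>i\<in>I. f i w) \<in> TAlg A"
proof (induction I rule: finite_induct)
  case empty
  then show ?case using subalg_gen.smult[OF subalg_gen.one, of 0] by simp
next
  case (insert a I)
  then show ?case using subalg_gen.add[of "f a" _ "\<lambda>w. \<Sum>i\<in>I. f i w"] by simp
qed

definition weight_le :: "'a bar0 \<Rightarrow> nat \<Rightarrow> bool" where
  "weight_le x W \<longleftrightarrow> (\<forall>w. x w \<noteq> 0 \<longrightarrow> weight w \<le> W)"

definition vanishes_below :: "'a bar0 \<Rightarrow> nat \<Rightarrow> bool" where
  "vanishes_below x m \<longleftrightarrow> (\<forall>w. length w < m \<longrightarrow> x w = 0)"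

lemma shuffle_weight_le: "weight_le x p \<Longrightarrow> weight_le y q \<Longrightarrow> weight_le (shuffle_prod x y) (p + q)"
  unfolding weight_le_def weight_def
  using shuffle_support_additive[of x UNIV "\<lambda>e. length e - 2" p y q] by blast

lemma vanishes_below_lquot: "vanishes_below x m \<Longrightarrow> vanishes_below (lquot a x) (m - 1)"
  unfolding vanishes_below_def lquot_def by auto

lemma shuffle_vanishes_below:
  "vanishes_below x p \<Longrightarrow> vanishes_below y q \<Longrightarrow> vanishes_below (shuffle_prod x y) (p + q)"
  unfolding vanishes_below_def
proof (intro allI impI)
  fix w
  show "\<forall>w. length w < p \<longrightarrow> x w = 0 \<Longrightarrow> \<forall>w. length w < q \<longrightarrow> y w = 0 \<Longrightarrow> length w < p + q \<Longrightarrow>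
    shuffle_prod x y w = 0"
  proof (induction w arbitrary: x y p q)
    case Nil then show ?case by (auto simp: shuffle_Nil)
  next
    case (Cons a w)
    have "shuffle_prod (lquot a x) y w = 0"
      by (rule Cons.IH[where p="p - 1" and q=q]) (use Cons.prems in \<open>auto simp: lquot_def\<close>)
    moreover have "shuffle_prod x (lquot a y) w = 0"
      by (rule Cons.IH[where p=p and q="q - 1"]) (use Cons.prems in \<open>auto simp: lquot_def\<close>)
    ultimately show ?case by (simp add: shuffle_Cons)
  qed
qed

lemma shuffle_lowest:
  "vanishes_below y (length w) \<Longrightarrow> shuffle_prod x y w = x [] * y w"
proof (induction w arbitrary: y)
  case Nil then show ?case by (simp add: shuffle_Nil)
next
  case (Cons a w)
  have "shuffle_prod (lquot a x) y w = 0"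
    using shuffle_vanishes_below[of "lquot a x" 0 y "length w + 1"] Cons.prems
    by (auto simp: vanishes_below_def)
  moreover have "shuffle_prod x (lquot a y) w = x [] * y (a # w)"
    using Cons.IH[of "lquot a y"] vanishes_below_lquot[OF Cons.prems, of a] by (simp add: lquot_def)
  ultimately show ?case by (simp add: shuffle_Cons)
qed

lemma shuffle_single_letter:
  assumes "vanishes_below x 1" "vanishes_below y (length w - 1)"
  shows "shuffle_prod x y w = (\<Sum>i<length w. x [w ! i] * y (take i w @ drop (Suc i) w))"
  using assms(2)
proof (induction w arbitrary: y)
  case Nil then show ?case using assms(1) by (simp add: shuffle_Nil vanishes_below_def)
next
  case (Cons a w)
  have 1: "shuffle_prod (lquot a x) y w = x [a] * y w"
    using shuffle_lowest[of y w "lquot a x"] Cons.prems by (simp add: lquot_def)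
  have 2: "shuffle_prod x (lquot a y) w = (\<Sum>i<length w. x [w ! i] * y (a # take i w @ drop (Suc i) w))"
    using Cons.IH[of "lquot a y"] vanishes_below_lquot[OF Cons.prems, of a] by (simp add: lquot_def)
  show ?case unfolding shuffle_Cons 1 2 length_Cons sum.lessThan_Suc_shift by simp
qed

text \<open>A cocycle vanishing below length \<open>m\<close> is symmetric on words of length \<open>m\<close>: there the
  differential has no contribution from contracting a letter.\<close>

lemma cocycle_swap_lowest:
  assumes "cocycle x" "vanishes_below x m" "length u + length v + 2 = m"
  shows "x (u @ [a, b] @ v) = x (u @ [b, a] @ v)"
proof -
  have e: "{c. x (u @ c # v) \<noteq> 0} = {}" using assms(2,3) by (auto simp: vanishes_below_def)
  have "bar_d x u a b v = bar_d x u b a v" using assms(1) by (simp add: cocycle_def)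
  then show ?thesis unfolding bar_d_def e by simp
qed

lemma cocycle_move_front:
  assumes "cocycle x" "vanishes_below x m" "length u + length v + 1 = m"
  shows "x (a # u @ v) = x (u @ a # v)"
  using assms(3)
proof (induction u arbitrary: v rule: rev_induct)
  case Nil then show ?case by simp
next
  case (snoc e u)
  have "x ((u @ [e]) @ a # v) = x (u @ [e, a] @ v)" by simp
  also have "\<dots> = x (u @ [a, e] @ v)" by (rule cocycle_swap_lowest[OF assms(1,2)]) (use snoc.prems in simp)
  also have "\<dots> = x (a # u @ (e # v))" using snoc.IH[of "e # v"] snoc.prems by simp
  finally show ?case by simp
qed

text \<open>Since the only word of
  length one in \<open>T B\<close> is \<open>[B]\<close>, on the shortest words of \<open>x\<close> the expansion reproduces \<open>x\<close> up
  to a factor; it lies in \<open>H\<^sup>0\<close>, has the weight bound of \<open>x\<close>, and is generated as soon as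
  the left quotients \<open>B\<^sup>-\<^sup>1 x\<close> (of smaller weight) are.\<close>

definition T_expansion :: "'a list \<Rightarrow> 'a bar0 \<Rightarrow> 'a bar0" where
  "T_expansion A x = (\<lambda>w. \<Sum>B\<in>pieces A. shuffle_prod (T B) (lquot B x) w)"

lemma T_expansion_lowest:
  assumes x: "x \<in> H0 A" and lv: "vanishes_below x m" and lw: "length w = m"
  shows "T_expansion A x w = of_nat m * x w"
proof -
  define rest where "rest i = take i w @ drop (Suc i) w" for i
  have move: "x (w ! i # rest i) = x w" if "i < m" for i
  proof -
    have "x (w ! i # rest i) = x (take i w @ w ! i # drop (Suc i) w)"
      unfolding rest_def by (rule cocycle_move_front[OF _ lv]) (use x that lw in \<open>auto simp: H0_iff\<close>)
    then show ?thesis using that lw by (simp add: id_take_nth_drop[symmetric])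
  qed
  have "T_expansion A x w = (\<Sum>B\<in>pieces A. \<Sum>i<m. T B [w ! i] * lquot B x (rest i))"
    unfolding T_expansion_def using shuffle_single_letter[of "T B" "lquot B x" w for B] vanishes_below_lquot[OF lv] lw
    by (simp add: vanishes_below_def T_Nil rest_def)
  also have "\<dots> = (\<Sum>i<m. \<Sum>B\<in>pieces A. if w ! i = B then x w else 0)"
    by (subst sum.swap) (auto simp: T_single lquot_def move intro!: sum.cong)
  also have "\<dots> = (\<Sum>i<m. if w ! i \<in> pieces A then x w else 0)"
    using finite_pieces[of A] by (simp add: sum.delta')
  also have "\<dots> = of_nat m * x w"
  proof (cases "x w = 0")
    case False
    then have "\<forall>i\<in>{..<m}. w ! i \<in> pieces A" using x lw by (auto simp: H0_iff dest!: nth_mem)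
    then show ?thesis by simp
  qed (simp cong: if_cong)
  finally show ?thesis .
qed

text \<open>An element of \<open>H\<^sup>0\<close> of bounded weight that vanishes
  below a length exceeding that weight is zero, since every piece has Adams degree \<open>\<ge> 1\<close>.\<close>

lemma H0_vanishing_beyond_weight:
  assumes len: "length A \<ge> 3" and x: "x \<in> H0 A" "weight_le x W" "vanishes_below x (Suc W)"
  shows "x = (\<lambda>_. 0)"
proof
  fix w show "x w = 0"
  proof (rule ccontr)
    assume nz: "x w \<noteq> 0"
    then have "\<forall>e\<in>set w. length e \<ge> 3" using x(1) pieces_length[OF len] by (auto simp: H0_iff)
    then have "length w \<le> W" using length_le_weight x(2) nz by (fastforce simp: weight_le_def)
    then show False using x(3) nz by (simp add: vanishes_below_def)
  qed
qed

lemma TAlg_remove_constant: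
  assumes x: "x \<in> H0 A" "weight_le x W"
    and higher: "\<And>y. y \<in> H0 A \<Longrightarrow> weight_le y W \<Longrightarrow> vanishes_below y 1 \<Longrightarrow> y \<in> TAlg A"
  shows "x \<in> TAlg A"
proof -
  define y where "y = (\<lambda>w. x w + (- x []) * bar_one w)"
  have "y \<in> H0 A" unfolding y_def by (intro H0_add H0_scale x(1) H0_one)
  moreover have "weight_le y W" using x(2) by (auto simp: weight_le_def y_def bar_one_def weight_def)
  moreover have "vanishes_below y 1" by (auto simp: vanishes_below_def y_def bar_one_def)
  ultimately have "(\<lambda>w. y w + x [] * bar_one w) \<in> TAlg A"
    by (intro subalg_gen.add subalg_gen.smult subalg_gen.one higher)
  moreover have "(\<lambda>w. y w + x [] * bar_one w) = x" by (auto simp: y_def fun_eq_iff)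
  ultimately show ?thesis by simp
qed

lemma weight_le_T_lquot:
  assumes len: "length A \<ge> 3" and B: "B \<in> pieces A" and x: "weight_le x W"
  shows "weight_le (shuffle_prod (T B) (lquot B x)) W"
proof (cases "\<exists>w. x (B # w) \<noteq> 0")
  case True
  then have le: "length B - 2 \<le> W" using x by (auto simp: weight_le_def weight_Cons)
  have "weight_le (T B) (length B - 2)" by (simp add: weight_le_def T_weight[OF pieces_length[OF len B]])
  moreover have "weight_le (lquot B x) (W - (length B - 2))"
    using x by (auto simp: weight_le_def lquot_def weight_Cons)
  ultimately have "weight_le (shuffle_prod (T B) (lquot B x)) ((length B - 2) + (W - (length B - 2)))"
    by (rule shuffle_weight_le)
  then show ?thesis using le by simp
next
  case False
  then have "lquot B x = (\<lambda>_. 0)" by (auto simp: lquot_def fun_eq_iff)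
  then show ?thesis by (simp add: shuffle_zero_right weight_le_def)
qed

lemma T_expansion_TAlg:
  "(\<And>B. B \<in> pieces A \<Longrightarrow> lquot B x \<in> TAlg A) \<Longrightarrow> T_expansion A x \<in> TAlg A"
  unfolding T_expansion_def
  by (rule TAlg_sum[OF finite_pieces]) (auto intro: subalg_gen.mult subalg_gen.gen)

lemma T_expansion_H0: "x \<in> H0 A \<Longrightarrow> T_expansion A x \<in> H0 A"
  unfolding T_expansion_def by (intro H0_sum[OF finite_pieces] H0_shuffle H0_T H0_lquot)

lemma T_expansion_weight_le:
  assumes len: "length A \<ge> 3" and x: "weight_le x W"
  shows "weight_le (T_expansion A x) W"
  unfolding weight_le_def
proof (intro allI impI)
  fix w assume "T_expansion A x w \<noteq> 0"
  then obtain B where "B \<in> pieces A" "shuffle_prod (T B) (lquot B x) w \<noteq> 0"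
    unfolding T_expansion_def by (meson sum.not_neutral_contains_not_neutral)
  then show "weight w \<le> W" using weight_le_T_lquot[OF len _ x] by (auto simp: weight_le_def)
qed

lemma T_expansion_vanishes_below:
  assumes x: "vanishes_below x m" and m: "m \<ge> 1"
  shows "vanishes_below (T_expansion A x) m"
  unfolding T_expansion_def vanishes_below_def
proof (intro allI impI sum.neutral ballI)
  fix w :: "'a list list" and B assume "length w < m"
  moreover have "vanishes_below (shuffle_prod (T B) (lquot B x)) (1 + (m - 1))"
    using vanishes_below_lquot[OF x]
    by (intro shuffle_vanishes_below) (auto simp: vanishes_below_def T_Nil)
  ultimately show "shuffle_prod (T B) (lquot B x) w = 0" using m by (simp add: vanishes_below_def)
qed

text \<open>The main reduction: if \<open>x\<close> vanishes below length \<open>m \<ge> 1\<close> and all its left quotients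
  are known to be generated, then \<open>x - T_expansion A x / m\<close> vanishes below length \<open>m + 1\<close>.\<close>

lemma TAlg_raise_length:
  assumes len: "length A \<ge> 3" and x: "x \<in> H0 A" "weight_le x W" "vanishes_below x m"
    and m: "m \<ge> 1"
    and quot: "\<And>B. B \<in> pieces A \<Longrightarrow> lquot B x \<in> TAlg A"
    and higher: "\<And>y. y \<in> H0 A \<Longrightarrow> weight_le y W \<Longrightarrow> vanishes_below y (Suc m) \<Longrightarrow> y \<in> TAlg A"
  shows "x \<in> TAlg A"
proof -
  define z where "z = T_expansion A x"
  define y where "y = (\<lambda>w. x w + (- (1 / of_nat m)) * z w)"
  have "y \<in> H0 A" unfolding y_def z_def by (intro H0_add H0_scale T_expansion_H0 x(1))
  moreover have "weight_le y W"
    using x(2) T_expansion_weight_le[OF len x(2)] unfolding weight_le_def y_def z_def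
    by (metis add.right_neutral mult_zero_right)
  moreover have "vanishes_below y (Suc m)" unfolding vanishes_below_def
  proof (intro allI impI)
    fix w :: "'a list list" assume "length w < Suc m"
    then consider "length w < m" | "length w = m" by linarith
    then show "y w = 0"
      using x(3) T_expansion_vanishes_below[OF x(3) m] T_expansion_lowest[OF x(1,3)] m
      by cases (simp_all add: vanishes_below_def y_def z_def)
  qed
  ultimately have "y \<in> TAlg A" by (rule higher)
  moreover have "z \<in> TAlg A" unfolding z_def using quot by (rule T_expansion_TAlg)
  ultimately have "(\<lambda>w. y w + (1 / of_nat m) * z w) \<in> TAlg A"
    by (intro subalg_gen.add subalg_gen.smult)
  moreover have "(\<lambda>w. y w + (1 / of_nat m) * z w) = x" by (auto simp: y_def fun_eq_iff)
  ultimately show ?thesis by simp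
qed

lemma H0_subset_TAlg:
  assumes len: "length A \<ge> 3"
  shows "x \<in> H0 A \<Longrightarrow> weight_le x W \<Longrightarrow> x \<in> TAlg A"
proof (induction W arbitrary: x rule: less_induct)
  case (less W)
  have "\<forall>y. y \<in> H0 A \<longrightarrow> weight_le y W \<longrightarrow> vanishes_below y m \<longrightarrow> y \<in> TAlg A"
    if "m \<le> Suc W" for m
    using that
  proof (induction m rule: inc_induct)
    case base
    show ?case
      using H0_vanishing_beyond_weight[OF len] subalg_gen.smult[OF subalg_gen.one, of 0] by auto
  next
    case (step m)
    show ?case
    proof (intro allI impI)
      fix y assume y: "y \<in> H0 A" "weight_le y W" "vanishes_below y m"
      show "y \<in> TAlg A"
      proof (cases "m = 0")
        case True
        then show ?thesis using TAlg_remove_constant[OF y(1,2)] step.IH by simp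
      next
        case False
        have "lquot B y \<in> TAlg A" if B: "B \<in> pieces A" for B
        proof (rule less.IH)
          show "W - 1 < W" using False step.hyps by simp
          show "lquot B y \<in> H0 A" using H0_lquot[OF y(1)] .
          show "weight_le (lquot B y) (W - 1)"
            using y(2) pieces_length[OF len B] by (auto simp: weight_le_def lquot_def weight_Cons)
        qed
        then show ?thesis using TAlg_raise_length[OF len y] False step.IH by simp
      qed
    qed
  qed
  then show ?case using less.prems by (auto simp: vanishes_below_def)
qed

theorem lemma2p5:
  fixes A :: "'a list"
  assumes "is_generator A"
  shows "H0 A = subalg_gen {T B | B. B \<in> pieces A}"
proof
  have len: "length A \<ge> 3" using assms by (simp add: is_generator_def)
  show "H0 A \<subseteq> TAlg A"
  proof
    fix x assume x: "x \<in> H0 A"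
    then have "finite {w. x w \<noteq> 0}" by (simp add: H0_iff fin_supp_def)
    then have "weight_le x (Max (weight ` {w. x w \<noteq> 0}))" by (auto simp: weight_le_def)
    then show "x \<in> TAlg A" using H0_subset_TAlg[OF len x] by blast
  qed
  show "TAlg A \<subseteq> H0 A" using TAlg_subset_H0 by blast
qed

end
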